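(* Let $\sqrt7$ denote either square root of $7$, and let $$\psi_4(x)=-\frac{(9x-4\sqrt7-29)^3\,(x-2\sqrt7-4)^4}{(4\sqrt7+29)\,(7x-10\sqrt7-32)^4},$$ a genus 0 Belyi map of degree 7 with passport $[4\,3/2^2\,1^3/4\,3]$. Let $\mathcal{E}$ be the elliptic curve $y^2=x\big(x^2-(4\sqrt7+7)x+16\sqrt7+35\big)$. Then the function $$\mathcal{Q}\{\psi_4\}=\frac12+\frac{27x^2-(72\sqrt7+252)x+344\sqrt7+1036}{(4\sqrt7+2)\,(7x-10\sqrt7-32)^2}\,y$$ on $\mathcal{E}$ is a Belyi map of degree 7 with passport $[4\,3/4\,3/2^2\,3]$.
   Context: A Belyi map on a compact Riemann surface $X$ is a nonconstant meromorphic function $f:X\to\mathbb{P}^1$ unramified outside $\{0,1,\infty\}$. Its passport $[a_1^{p_1}\cdots/b_1^{q_1}\cdots/c_1^{r_1}\cdots]$ lists the ramification indices of the points in $f^{-1}(0)$, $f^{-1}(1)$, $f^{-1}(\infty)$ respectively, with exponents denoting repetition. For a function $\varphi_0$, $\mathcal{Q}\{\varphi_0\}:=\frac12+\frac12\sqrt{1-\varphi_0}$. *)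

theory Defs
  imports "HOL-Analysis.Analysis" "HOL-Library.Multiset"
begin

text \<open>Points of a projective plane cubic y^2 = cubic(x): affine points Some (x,y),
  and the point at infinity None.  The projective line is complex option (None = infinity).\<close>

type_synonym cpt = "(complex \<times> complex) option"
type_synonym p1 = "complex option"

definition ballE :: "cpt set \<Rightarrow> cpt \<Rightarrow> real \<Rightarrow> cpt set" where
  "ballE C P r = {Q \<in> C. (case P of
       None \<Rightarrow> (case Q of None \<Rightarrow> True | Some (x, y) \<Rightarrow> norm x > 1 / r)
     | Some (x0, y0) \<Rightarrow> (case Q of None \<Rightarrow> False
          | Some (x, y) \<Rightarrow> norm (x - x0) < r \<and> norm (y - y0) < r))}"

definition ballP :: "p1 \<Rightarrow> real \<Rightarrow> p1 set" where
  "ballP w r = (case w of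
       None \<Rightarrow> {None} \<union> {Some z | z. norm z > 1 / r}
     | Some w0 \<Rightarrow> {Some z | z. norm (z - w0) < r})"

text \<open>Ramification index = local degree: for all small neighbourhoods of P,
  every value close to (but different from) f P has exactly e preimages there.\<close>
definition has_ram_index :: "cpt set \<Rightarrow> (cpt \<Rightarrow> p1) \<Rightarrow> cpt \<Rightarrow> nat \<Rightarrow> bool" where
  "has_ram_index C f P e \<longleftrightarrow>
     (\<exists>r0>0. \<forall>r. 0 < r \<and> r \<le> r0 \<longrightarrow>
        (\<exists>\<delta>>0. \<forall>w \<in> ballP (f P) \<delta> - {f P}. card {Q \<in> ballE C P r. f Q = w} = e))"

definition ram_index :: "cpt set \<Rightarrow> (cpt \<Rightarrow> p1) \<Rightarrow> cpt \<Rightarrow> nat" where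
  "ram_index C f P = (THE e. has_ram_index C f P e)"

definition fib :: "cpt set \<Rightarrow> (cpt \<Rightarrow> p1) \<Rightarrow> p1 \<Rightarrow> cpt set" where
  "fib C f w = {Q \<in> C. f Q = w}"

definition passport_at :: "cpt set \<Rightarrow> (cpt \<Rightarrow> p1) \<Rightarrow> p1 \<Rightarrow> nat multiset" where
  "passport_at C f w = image_mset (ram_index C f) (mset_set (fib C f w))"

definition belyi_map_passport ::
  "cpt set \<Rightarrow> (cpt \<Rightarrow> p1) \<Rightarrow> nat \<Rightarrow> nat multiset \<Rightarrow> nat multiset \<Rightarrow> nat multiset \<Rightarrow> bool" where
  "belyi_map_passport C f n A B D \<longleftrightarrow>
     (\<forall>P \<in> C. \<exists>e. has_ram_index C f P e) \<and>
     (\<forall>w. finite (fib C f w) \<and> (\<Sum>Q \<in> fib C f w. ram_index C f Q) = n) \<and>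
     (\<forall>P \<in> C. f P \<notin> {Some 0, Some 1, None} \<longrightarrow> ram_index C f P = 1) \<and>
     passport_at C f (Some 0) = A \<and> passport_at C f (Some 1) = B \<and> passport_at C f None = D"

definition curveE :: "complex \<Rightarrow> cpt set" where
  "curveE s = insert None (Some ` {(x, y). y^2 = x * (x^2 - (4 * s + 7) * x + 16 * s + 35)})"

definition psi4 :: "complex \<Rightarrow> complex \<Rightarrow> complex" where
  "psi4 s x = - ((9 * x - 4 * s - 29)^3 * (x - 2 * s - 4)^4) / ((4 * s + 29) * (7 * x - 10 * s - 32)^4)"

definition Qval :: "complex \<Rightarrow> complex \<Rightarrow> complex \<Rightarrow> complex" where
  "Qval s x y = 1/2 + (27 * x^2 - (72 * s + 252)*x + 344 * s + 1036) / ((4 * s + 2) * (7 * x - 10 * s - 32)^2) * y"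

definition Qpsi4 :: "complex \<Rightarrow> cpt \<Rightarrow> p1" where
  "Qpsi4 s P = (case P of None \<Rightarrow> None
     | Some (x, y) \<Rightarrow> (if 7 * x - 10 * s - 32 = 0 then None else Some (Qval s x y)))"

end

theory Submission
  imports Defs "HOL-Complex_Analysis.Complex_Analysis"
    "HOL-Computational_Algebra.Fundamental_Theorem_Algebra"
begin

(* Write T, P, R for the linear forms pole_lin, zero3_lin, zero4_lin, so that
   psi4 = - P^3 R^4 / ((4s+29) T^4), and N = qnum, so that Q = 1/2 + N y / ((4s+2) T^2).
   The identity 4 N^2 (4s+29) x (x^2 - (4s+7) x + 16s+35) = (4s+2)^2 ((4s+29) T^4 + P^3 R^4)
   gives (2Q - 1)^2 = 1 - psi4 on E. Consequently the points of E where Q = a, for a <> 1/2,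
   lie one over each root of the degree 7 polynomial (4s+29)(1 - c) T^4 + P^3 R^4 with
   c = (2a - 1)^2, and the ramification index of Q at such a point is the multiplicity of
   the root, so every fibre has degree 7. For a = 0, 1 this polynomial is P^3 R^4, and for
   every other a <> 1/2 it is squarefree. Over 1/2 lie the four points with N = 0 and the
   three branch points of E, over infinity the point at infinity and the two points with T = 0.
   Each ramification index is read off from a normal form w0 + z^n k z, k 0 <> 0, of Q in a
   local chart of E (x at ordinary points, y at branch points, v with x = 1/v^2 at infinity). *)

section \<open>Local degree of holomorphic maps\<close>

lemma continuous_at_ball_bound:
  fixes f :: "complex \<Rightarrow> complex"
  assumes "continuous (at z0) f" "e > 0"
  obtains d where "d > 0" "\<And>z. z \<in> ball z0 d \<Longrightarrow> cmod (f z - f z0) < e"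
  using assms unfolding continuous_at_eps_delta by (metis dist_commute dist_norm mem_ball)

lemma continuous_at_nonzero_ball:
  fixes f :: "complex \<Rightarrow> complex"
  assumes "continuous (at z0) f" "f z0 \<noteq> 0"
  obtains d where "d > 0" "\<And>z. z \<in> ball z0 d \<Longrightarrow> f z \<noteq> 0"
proof -
  obtain d where "d > 0" "\<forall>z. dist z0 z < d \<longrightarrow> f z \<noteq> 0"
    using continuous_at_avoid[OF assms] by blast
  then show ?thesis using that by auto
qed

lemma continuous_at_not_nonpos_Reals_ball:
  fixes f :: "complex \<Rightarrow> complex"
  assumes "continuous (at z0) f" "f z0 = 1"
  obtains d where "d > 0" "\<And>z. z \<in> ball z0 d \<Longrightarrow> f z \<notin> \<real>\<^sub>\<le>\<^sub>0"
proof -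
  have "open (- \<real>\<^sub>\<le>\<^sub>0 :: complex set) \<and> f z0 \<in> - \<real>\<^sub>\<le>\<^sub>0"
    using assms(2) by (simp add: open_Compl)
  from mp[OF spec[OF assms(1)[unfolded continuous_at_open]] this]
  obtain S where S: "open S" "z0 \<in> S" "\<And>z. z \<in> S \<Longrightarrow> f z \<notin> \<real>\<^sub>\<le>\<^sub>0"
    by auto
  then obtain d where "d > 0" "ball z0 d \<subseteq> S" by (meson open_contains_ball)
  with S(3) that show ?thesis by blast
qed

lemma compact_norm_bound_below:
  fixes h :: "complex \<Rightarrow> complex"
  assumes "compact K" "continuous_on K h" "\<And>z. z \<in> K \<Longrightarrow> h z \<noteq> 0"
  obtains \<mu> where "\<mu> > 0" "\<And>z. z \<in> K \<Longrightarrow> \<mu> \<le> cmod (h z)"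
proof (cases "K = {}")
  case False
  have "continuous_on K (\<lambda>z. cmod (h z))" using assms(2) by (intro continuous_intros)
  then obtain z1 where "z1 \<in> K" "\<And>z. z \<in> K \<Longrightarrow> cmod (h z1) \<le> cmod (h z)"
    using continuous_attains_inf[OF assms(1) False] by blast
  then show ?thesis using that[of "cmod (h z1)"] assms(3) by auto
qed (use that[of 1] in auto)

lemma holomorphic_on_ball_imp_isCont:
  "f holomorphic_on ball z0 r \<Longrightarrow> r > 0 \<Longrightarrow> isCont f z0"
  by (metis centre_in_ball continuous_on_interior holomorphic_on_imp_continuous_on interior_ball)

lemma holomorphic_nth_root_local:
  fixes k :: "complex \<Rightarrow> complex"
  assumes holk: "k holomorphic_on ball z0 \<rho>" and \<rho>: "\<rho> > 0" and kz0: "k z0 \<noteq> 0" and n: "n > 0"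
  obtains \<rho>1 m where "0 < \<rho>1" "\<rho>1 \<le> \<rho>" "m holomorphic_on ball z0 \<rho>1" "m z0 \<noteq> 0"
    "\<And>z. z \<in> ball z0 \<rho>1 \<Longrightarrow> m z ^ n = k z"
proof -
  define u where "u z = k z / k z0" for z
  have "isCont u z0"
    unfolding u_def using holomorphic_on_ball_imp_isCont[OF holk \<rho>] kz0 by (intro continuous_intros)
  moreover have "u z0 = 1" using kz0 by (simp add: u_def)
  ultimately obtain d where d: "d > 0" "\<And>z. z \<in> ball z0 d \<Longrightarrow> u z \<notin> \<real>\<^sub>\<le>\<^sub>0"
    using continuous_at_not_nonpos_Reals_ball by blast
  define \<rho>1 where "\<rho>1 = min d \<rho>"
  define m where "m z = exp (Ln (k z0) / of_nat n) * exp (Ln (u z) / of_nat n)" for z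
  have root: "exp (Ln a / of_nat n) ^ n = a" if "a \<noteq> 0" for a
    using n that by (simp flip: exp_of_nat_mult)
  show ?thesis
  proof (rule that[of \<rho>1 m])
    show "0 < \<rho>1" "\<rho>1 \<le> \<rho>" using d \<rho> by (auto simp: \<rho>1_def)
    have "u holomorphic_on ball z0 \<rho>1"
      unfolding u_def using holk by (intro holomorphic_intros) (auto simp: \<rho>1_def)
    then show "m holomorphic_on ball z0 \<rho>1"
      unfolding m_def using d(2) by (intro holomorphic_intros) (auto simp: \<rho>1_def)
    show "m z0 \<noteq> 0" by (simp add: m_def)
    show "m z ^ n = k z" if "z \<in> ball z0 \<rho>1" for z
    proof -
      have "u z \<noteq> 0" using d(2)[of z] that by (auto simp: \<rho>1_def)
      then show ?thesis
        using root[OF kz0] root[of "u z"] kz0 by (simp add: m_def power_mult_distrib u_def)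
    qed
  qed
qed

lemma card_preimage_nth_roots:
  fixes h :: "complex \<Rightarrow> complex"
  assumes inj: "inj_on h A" and roots: "{v. v ^ n = w} \<subseteq> h ` A" and "w \<noteq> 0" "n > 0"
  shows "card {z \<in> A. h z ^ n = w} = n"
proof -
  have img: "h ` {z \<in> A. h z ^ n = w} = {v. v ^ n = w}"
  proof (intro equalityI subsetI)
    fix v assume v: "v \<in> {v. v ^ n = w}"
    then obtain z where "z \<in> A" "v = h z" using roots by blast
    then show "v \<in> h ` {z \<in> A. h z ^ n = w}" using v by auto
  qed auto
  have "inj_on h {z \<in> A. h z ^ n = w}" by (rule inj_on_subset[OF inj]) auto
  from card_image[OF this] have "card {z \<in> A. h z ^ n = w} = card {v. v ^ n = w}"
    unfolding img ..
  also have "\<dots> = n" using card_nth_roots assms(3,4) by simp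
  finally show ?thesis .
qed

text \<open>Every small w \<noteq> 0 has exactly n n-th roots, all of them values of h on small discs.\<close>
lemma local_degree_power:
  fixes h :: "complex \<Rightarrow> complex"
  assumes holh: "h holomorphic_on ball z0 \<rho>" and inj: "inj_on h (ball z0 \<rho>)"
    and h0: "h z0 = 0" and n: "n > 0" and \<rho>: "\<rho> > 0"
  shows "\<exists>\<rho>0>0. \<rho>0 \<le> \<rho> \<and> (\<forall>r. 0 < r \<and> r \<le> \<rho>0 \<longrightarrow> (\<exists>\<delta>>0. \<forall>w. 0 < cmod w \<and> cmod w < \<delta> \<longrightarrow>
            card {z \<in> ball z0 r. h z ^ n = w} = n \<and> {z \<in> ball z0 \<rho>0. h z ^ n = w} \<subseteq> ball z0 r))"
proof -
  define \<rho>0 where "\<rho>0 = \<rho> / 2"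
  have small: "cmod v < e" if "v ^ n = w" "e > 0" "cmod w < e ^ n" for v w e
  proof -
    have "cmod v ^ n = cmod w" using that(1) by (simp flip: norm_power)
    then show ?thesis using that power_less_imp_less_base[of "cmod v" n e] by simp
  qed
  have "\<exists>\<delta>>0. \<forall>w. 0 < cmod w \<and> cmod w < \<delta> \<longrightarrow>
          card {z \<in> ball z0 r. h z ^ n = w} = n \<and> {z \<in> ball z0 \<rho>0. h z ^ n = w} \<subseteq> ball z0 r"
    if r: "0 < r" "r \<le> \<rho>0" for r
  proof -
    have sub: "ball z0 r \<subseteq> ball z0 \<rho>" using r \<rho> by (auto simp: \<rho>0_def)
    have "open (h ` ball z0 r)"
      using open_mapping_thm3 holh inj sub by (meson holomorphic_on_subset inj_on_subset open_ball)
    moreover have "0 \<in> h ` ball z0 r" using h0 r by (metis centre_in_ball imageI)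
    ultimately obtain \<epsilon> where \<epsilon>: "\<epsilon> > 0" "ball 0 \<epsilon> \<subseteq> h ` ball z0 r"
      by (meson open_contains_ball)
    define K where "K = cball z0 \<rho>0 - ball z0 r"
    have "compact K" by (simp add: K_def compact_diff)
    have K: "K \<subseteq> ball z0 \<rho> - {z0}"
      using r \<rho> by (auto simp: K_def \<rho>0_def subset_iff dist_commute)
    have "h z \<noteq> 0" if "z \<in> K" for z
    proof
      assume "h z = 0"
      moreover have "z \<in> ball z0 \<rho>" "z \<noteq> z0" using K that by auto
      ultimately show False using inj_onD[OF inj, of z z0] h0 \<rho> by simp
    qed
    moreover have "continuous_on K h"
      using K holh by (meson Diff_subset continuous_on_subset holomorphic_on_imp_continuous_on order_trans)
    ultimately obtain \<mu> where \<mu>: "\<mu> > 0" "\<And>z. z \<in> K \<Longrightarrow> \<mu> \<le> cmod (h z)"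
      using compact_norm_bound_below[OF \<open>compact K\<close>] by blast
    have "card {z \<in> ball z0 r. h z ^ n = w} = n \<and> {z \<in> ball z0 \<rho>0. h z ^ n = w} \<subseteq> ball z0 r"
      if w: "0 < cmod w" "cmod w < min (\<epsilon>^n) (\<mu>^n)" for w
    proof
      show "{z \<in> ball z0 \<rho>0. h z ^ n = w} \<subseteq> ball z0 r"
      proof
        fix z assume z: "z \<in> {z \<in> ball z0 \<rho>0. h z ^ n = w}"
        then have "cmod (h z) < \<mu>" using small[of "h z" w \<mu>] w \<mu> by simp
        then have "z \<notin> K" using \<mu>(2) by fastforce
        then show "z \<in> ball z0 r" using z by (simp add: K_def)
      qed
      have "{v. v ^ n = w} \<subseteq> h ` ball z0 r"
      proof
        fix v assume "v \<in> {v. v ^ n = w}"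
        then have "v \<in> ball 0 \<epsilon>" using small[of v w \<epsilon>] w \<epsilon> by simp
        then show "v \<in> h ` ball z0 r" using \<epsilon>(2) by blast
      qed
      then show "card {z \<in> ball z0 r. h z ^ n = w} = n"
        using card_preimage_nth_roots[OF inj_on_subset[OF inj sub]] w(1) n by simp
    qed
    then show ?thesis using \<epsilon>(1) \<mu>(1) by (intro exI[of _ "min (\<epsilon>^n) (\<mu>^n)"]) simp
  qed
  moreover have "\<rho>0 > 0" "\<rho>0 \<le> \<rho>" using \<rho> by (auto simp: \<rho>0_def)
  ultimately show ?thesis by blast
qed

lemma holomorphic_local_degree:
  fixes g k :: "complex \<Rightarrow> complex"
  assumes holk: "k holomorphic_on ball z0 \<rho>" and \<rho>: "\<rho> > 0" and kz0: "k z0 \<noteq> 0" and n: "n > 0"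
    and geq: "\<And>z. z \<in> ball z0 \<rho> \<Longrightarrow> g z = w0 + (z - z0)^n * k z"
  shows "\<exists>\<rho>0>0. \<rho>0 \<le> \<rho> \<and> (\<forall>r. 0 < r \<and> r \<le> \<rho>0 \<longrightarrow> (\<exists>\<delta>>0. \<forall>w. 0 < cmod (w - w0) \<and> cmod (w - w0) < \<delta> \<longrightarrow>
            card {z \<in> ball z0 r. g z = w} = n \<and> {z \<in> ball z0 \<rho>0. g z = w} \<subseteq> ball z0 r))"
proof -
  obtain \<rho>1 m where \<rho>1: "0 < \<rho>1" "\<rho>1 \<le> \<rho>" and holm: "m holomorphic_on ball z0 \<rho>1"
    and mz0: "m z0 \<noteq> 0" and mpow: "\<And>z. z \<in> ball z0 \<rho>1 \<Longrightarrow> m z ^ n = k z"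
    using holomorphic_nth_root_local[OF holk \<rho> kz0 n] by blast
  define h where "h z = (z - z0) * m z" for z
  have holh: "h holomorphic_on ball z0 \<rho>1" unfolding h_def using holm by (intro holomorphic_intros)
  have "(h has_field_derivative (1 - 0) * m z0 + deriv m z0 * (z0 - z0)) (at z0)"
    unfolding h_def using holomorphic_derivI[OF holm open_ball, of z0] \<rho>1
    by (intro DERIV_mult DERIV_diff DERIV_ident DERIV_const) auto
  then have "deriv h z0 \<noteq> 0" using mz0 by (simp add: DERIV_imp_deriv)
  moreover have "z0 \<in> ball z0 \<rho>1" using \<rho>1 by simp
  ultimately obtain \<rho>2 where \<rho>2: "\<rho>2 > 0" "ball z0 \<rho>2 \<subseteq> ball z0 \<rho>1" "inj_on h (ball z0 \<rho>2)"
    using has_complex_derivative_locally_injective[OF holh _ open_ball] by metis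
  have gh: "g z = w0 + h z ^ n" if "z \<in> ball z0 \<rho>2" for z
    using geq mpow that \<rho>1 \<rho>2 by (auto simp: h_def power_mult_distrib)
  have "\<rho>2 \<le> \<rho>" using ball_subset_ball_iff[of z0 \<rho>2 z0 \<rho>1] \<rho>2 \<rho>1 by auto
  obtain \<rho>0 where \<rho>0: "\<rho>0 > 0" "\<rho>0 \<le> \<rho>2" and L: "\<forall>r. 0 < r \<and> r \<le> \<rho>0 \<longrightarrow> (\<exists>\<delta>>0. \<forall>w. 0 < cmod w \<and> cmod w < \<delta> \<longrightarrow>
            card {z \<in> ball z0 r. h z ^ n = w} = n \<and> {z \<in> ball z0 \<rho>0. h z ^ n = w} \<subseteq> ball z0 r)"
    using local_degree_power[OF holomorphic_on_subset[OF holh \<rho>2(2)] \<rho>2(3) _ n \<rho>2(1)]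
    by (auto simp: h_def)
  have eq: "{z \<in> ball z0 r. g z = w} = {z \<in> ball z0 r. h z ^ n = w - w0}" if "r \<le> \<rho>2" for r w
    using gh that by auto
  show ?thesis
  proof (rule exI[of _ \<rho>0], intro conjI allI impI)
    show "\<rho>0 > 0" "\<rho>0 \<le> \<rho>" using \<rho>0 \<open>\<rho>2 \<le> \<rho>\<close> by auto
    fix r assume r: "0 < r \<and> r \<le> \<rho>0"
    then obtain \<delta> where \<delta>: "\<delta> > 0" "\<And>u. 0 < cmod u \<and> cmod u < \<delta> \<Longrightarrow>
        card {z \<in> ball z0 r. h z ^ n = u} = n \<and> {z \<in> ball z0 \<rho>0. h z ^ n = u} \<subseteq> ball z0 r"
      using L by blast
    show "\<exists>\<delta>>0. \<forall>w. 0 < cmod (w - w0) \<and> cmod (w - w0) < \<delta> \<longrightarrow>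
            card {z \<in> ball z0 r. g z = w} = n \<and> {z \<in> ball z0 \<rho>0. g z = w} \<subseteq> ball z0 r"
      using \<delta> eq[of r] eq[of \<rho>0] r \<rho>0 by (intro exI[of _ \<delta>]) auto
  qed
qed

section \<open>Ramification indices in local coordinates\<close>

lemma ballE_mono: "0 < r \<Longrightarrow> r \<le> r' \<Longrightarrow> ballE C P r \<subseteq> ballE C P r'"
  using frac_le[of 1 1 r r'] by (auto simp: ballE_def split: option.splits)

lemma ballP_mono: "0 < r \<Longrightarrow> r \<le> r' \<Longrightarrow> ballP w r \<subseteq> ballP w r'"
  using frac_le[of 1 1 r r'] by (auto simp: ballP_def split: option.splits)

lemma ballP_punctured_nonempty:
  assumes "\<delta> > 0"
  obtains v where "v \<in> ballP w \<delta> - {w}"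
proof (cases w)
  case None
  have "1 / \<delta> < 2 / \<delta>" using assms by (simp add: divide_strict_right_mono)
  then show ?thesis using that[of "Some (of_real (2 / \<delta>))"] assms None
    by (auto simp: ballP_def norm_divide)
next
  case (Some a)
  then show ?thesis using that[of "Some (a + of_real (\<delta> / 2))"] assms by (auto simp: ballP_def)
qed

lemma has_ram_index_unique:
  assumes "has_ram_index C f P e1" "has_ram_index C f P e2"
  shows "e1 = e2"
proof -
  obtain r1 where r1: "r1 > 0" "\<forall>r. 0 < r \<and> r \<le> r1 \<longrightarrow>
      (\<exists>\<delta>>0. \<forall>w \<in> ballP (f P) \<delta> - {f P}. card {Q \<in> ballE C P r. f Q = w} = e1)"
    using assms(1) unfolding has_ram_index_def by blast
  obtain r2 where r2: "r2 > 0" "\<forall>r. 0 < r \<and> r \<le> r2 \<longrightarrow>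
      (\<exists>\<delta>>0. \<forall>w \<in> ballP (f P) \<delta> - {f P}. card {Q \<in> ballE C P r. f Q = w} = e2)"
    using assms(2) unfolding has_ram_index_def by blast
  define r where "r = min r1 r2"
  have r: "0 < r" "r \<le> r1" "r \<le> r2" using r1 r2 by (auto simp: r_def)
  obtain \<delta>1 where \<delta>1: "\<delta>1 > 0" "\<forall>w \<in> ballP (f P) \<delta>1 - {f P}. card {Q \<in> ballE C P r. f Q = w} = e1"
    using r1(2) r by blast
  obtain \<delta>2 where \<delta>2: "\<delta>2 > 0" "\<forall>w \<in> ballP (f P) \<delta>2 - {f P}. card {Q \<in> ballE C P r. f Q = w} = e2"
    using r2(2) r by blast
  define \<delta> where "\<delta> = min \<delta>1 \<delta>2"
  have "\<delta> > 0" using \<delta>1 \<delta>2 by (simp add: \<delta>_def)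
  then obtain w where w: "w \<in> ballP (f P) \<delta> - {f P}" by (rule ballP_punctured_nonempty)
  have "ballP (f P) \<delta> \<subseteq> ballP (f P) \<delta>1" "ballP (f P) \<delta> \<subseteq> ballP (f P) \<delta>2"
    using \<open>\<delta> > 0\<close> by (simp_all add: ballP_mono \<delta>_def)
  then have "card {Q \<in> ballE C P r. f Q = w} = e1" "card {Q \<in> ballE C P r. f Q = w} = e2"
    using \<delta>1(2) \<delta>2(2) w by blast+
  then show ?thesis by simp
qed

lemma ram_index_eqI: "has_ram_index C f P e \<Longrightarrow> ram_index C f P = e"
  unfolding ram_index_def by (rule the_equality) (auto intro: has_ram_index_unique)

definition curve_chart :: "cpt set \<Rightarrow> cpt \<Rightarrow> (complex \<Rightarrow> cpt) \<Rightarrow> complex \<Rightarrow> real \<Rightarrow> bool" where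
  "curve_chart C P \<phi> z0 \<rho> \<longleftrightarrow> 0 < \<rho> \<and> inj_on \<phi> (ball z0 \<rho>) \<and> \<phi> z0 = P \<and>
     (\<forall>r>0. \<exists>r'>0. \<phi> ` ball z0 r' \<subseteq> ballE C P r) \<and>
     (\<forall>\<rho>'. 0 < \<rho>' \<and> \<rho>' \<le> \<rho> \<longrightarrow> (\<exists>r>0. ballE C P r \<subseteq> \<phi> ` ball z0 \<rho>'))"

lemma curve_chart_shrink:
  assumes "curve_chart C P \<phi> z0 \<rho>" "0 < \<rho>'" "\<rho>' \<le> \<rho>"
  shows "curve_chart C P \<phi> z0 \<rho>'"
  using assms inj_on_subset[OF _ subset_ball[OF assms(3)], of \<phi>] by (auto simp: curve_chart_def)

lemma curve_chart_shrink_nonzero: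
  fixes F :: "complex \<Rightarrow> complex"
  assumes chart: "curve_chart C P \<phi> z0 \<rho>" and F: "isCont F z0" "F z0 \<noteq> 0"
  obtains \<rho>' where "\<rho>' \<le> \<rho>" "curve_chart C P \<phi> z0 \<rho>'" "\<And>z. z \<in> ball z0 \<rho>' \<Longrightarrow> F z \<noteq> 0"
proof -
  obtain d where d: "d > 0" "\<And>z. z \<in> ball z0 d \<Longrightarrow> F z \<noteq> 0"
    using continuous_at_nonzero_ball[OF F] by blast
  have "0 < min \<rho> d" using chart d by (simp add: curve_chart_def)
  then show ?thesis
    using that[of "min \<rho> d"] curve_chart_shrink[OF chart] d(2) by simp
qed

text \<open>V is a local coordinate of the projective line at w, centred at w0.\<close>
definition p1_coord :: "(complex \<Rightarrow> p1) \<Rightarrow> complex \<Rightarrow> p1 \<Rightarrow> bool" where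
  "p1_coord V w0 w \<longleftrightarrow> (\<forall>\<delta>>0. \<exists>\<delta>'>0. \<forall>v \<in> ballP w \<delta>' - {w}.
     \<exists>u. 0 < cmod (u - w0) \<and> cmod (u - w0) < \<delta> \<and> (\<forall>u'. V u' = v \<longleftrightarrow> u' = u))"

definition inv_coord :: "complex \<Rightarrow> p1" where
  "inv_coord u = (if u = 0 then None else Some (inverse u))"

lemma p1_coord_Some: "p1_coord Some w0 (Some w0)"
  unfolding p1_coord_def by (force simp: ballP_def)

lemma p1_coord_inv_coord: "p1_coord inv_coord 0 None"
  unfolding p1_coord_def
proof (intro allI impI)
  fix \<delta> :: real assume \<delta>: "\<delta> > 0"
  have inv: "\<exists>u. 0 < cmod (u - 0) \<and> cmod (u - 0) < \<delta> \<and> (\<forall>u'. inv_coord u' = v \<longleftrightarrow> u' = u)"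
    if v: "v \<in> ballP None \<delta> - {None}" for v
  proof -
    obtain a where a: "v = Some a" "1 / \<delta> < cmod a" using v by (auto simp: ballP_def)
    have "0 < 1 / \<delta>" using \<delta> by simp
    then have "inverse (cmod a) < inverse (1 / \<delta>)" by (rule less_imp_inverse_less[OF a(2)])
    moreover have "a \<noteq> 0" using a(2) \<open>0 < 1 / \<delta>\<close> by auto
    ultimately have "a \<noteq> 0" "cmod (inverse a) < \<delta>" by (simp_all add: norm_inverse)
    then show ?thesis
      using a(1) by (intro exI[of _ "inverse a"]) (auto simp: inv_coord_def inverse_eq_iff_eq)
  qed
  show "\<exists>\<delta>'>0. \<forall>v\<in>ballP None \<delta>' - {None}. \<exists>u. 0 < cmod (u - 0) \<and> cmod (u - 0) < \<delta> \<and>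
      (\<forall>u'. inv_coord u' = v \<longleftrightarrow> u' = u)"
    by (rule exI[of _ \<delta>], intro conjI ballI \<delta>) (rule inv)
qed

lemma has_ram_index_chart:
  fixes g k :: "complex \<Rightarrow> complex"
  assumes chart: "curve_chart C P \<phi> z0 \<rho>"
    and holk: "k holomorphic_on ball z0 \<rho>" and kz0: "k z0 \<noteq> 0" and n: "n > 0"
    and geq: "\<And>z. z \<in> ball z0 \<rho> \<Longrightarrow> g z = w0 + (z - z0)^n * k z"
    and fV: "\<And>z. z \<in> ball z0 \<rho> \<Longrightarrow> f (\<phi> z) = V (g z)"
    and coord: "p1_coord V w0 (f P)"
  shows "has_ram_index C f P n"
proof -
  have \<rho>: "\<rho> > 0" and inj: "inj_on \<phi> (ball z0 \<rho>)"
    and cont: "\<And>r. r > 0 \<Longrightarrow> \<exists>r'>0. \<phi> ` ball z0 r' \<subseteq> ballE C P r"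
    and opn: "\<And>\<rho>'. 0 < \<rho>' \<Longrightarrow> \<rho>' \<le> \<rho> \<Longrightarrow> \<exists>r>0. ballE C P r \<subseteq> \<phi> ` ball z0 \<rho>'"
    using chart unfolding curve_chart_def by blast+
  obtain \<rho>0 where \<rho>0: "\<rho>0 > 0" "\<rho>0 \<le> \<rho>" and L: "\<forall>r. 0 < r \<and> r \<le> \<rho>0 \<longrightarrow> (\<exists>\<delta>>0. \<forall>w. 0 < cmod (w - w0) \<and> cmod (w - w0) < \<delta> \<longrightarrow>
            card {z \<in> ball z0 r. g z = w} = n \<and> {z \<in> ball z0 \<rho>0. g z = w} \<subseteq> ball z0 r)"
    using holomorphic_local_degree[OF holk \<rho> kz0 n geq] by blast
  obtain R0 where R0: "R0 > 0" "ballE C P R0 \<subseteq> \<phi> ` ball z0 \<rho>0" using opn \<rho>0 by blast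
  have "\<exists>\<delta>>0. \<forall>w\<in>ballP (f P) \<delta> - {f P}. card {Q \<in> ballE C P r. f Q = w} = n"
    if r: "0 < r" "r \<le> R0" for r
  proof -
    obtain r' where r': "r' > 0" "\<phi> ` ball z0 r' \<subseteq> ballE C P r" using cont r by blast
    define r1 where "r1 = min r' \<rho>0"
    have r1: "0 < r1" "r1 \<le> \<rho>0" "ball z0 r1 \<subseteq> ball z0 \<rho>"
      using r' \<rho>0 by (auto simp: r1_def)
    have "\<phi> ` ball z0 r1 \<subseteq> ballE C P r"
      using r'(2) image_mono[OF subset_ball[of r1 r']] by (auto simp: r1_def)
    obtain \<delta> where \<delta>: "\<delta> > 0" "\<forall>w. 0 < cmod (w - w0) \<and> cmod (w - w0) < \<delta> \<longrightarrow>
            card {z \<in> ball z0 r1. g z = w} = n \<and> {z \<in> ball z0 \<rho>0. g z = w} \<subseteq> ball z0 r1"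
      using L r1 by blast
    obtain \<delta>' where \<delta>': "\<delta>' > 0" "\<forall>v \<in> ballP (f P) \<delta>' - {f P}. \<exists>u. 0 < cmod (u - w0) \<and>
        cmod (u - w0) < \<delta> \<and> (\<forall>u'. V u' = v \<longleftrightarrow> u' = u)"
      using coord \<delta>(1) unfolding p1_coord_def by blast
    have "card {Q \<in> ballE C P r. f Q = v} = n" if v: "v \<in> ballP (f P) \<delta>' - {f P}" for v
    proof -
      obtain u where u: "0 < cmod (u - w0)" "cmod (u - w0) < \<delta>" "\<And>u'. V u' = v \<longleftrightarrow> u' = u"
        using \<delta>'(2) v by blast
      have cardn: "card {z \<in> ball z0 r1. g z = u} = n"
        and incl: "{z \<in> ball z0 \<rho>0. g z = u} \<subseteq> ball z0 r1"
        using \<delta>(2) u by blast+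
      have "{Q \<in> ballE C P r. f Q = v} = \<phi> ` {z \<in> ball z0 r1. g z = u}"
      proof (intro equalityI subsetI)
        fix Q assume Q: "Q \<in> {Q \<in> ballE C P r. f Q = v}"
        then have "Q \<in> ballE C P R0" using ballE_mono[of r R0 C P] r by blast
        then obtain z where z: "z \<in> ball z0 \<rho>0" "Q = \<phi> z" using R0 by blast
        then have "V (g z) = v" using fV[of z] Q \<rho>0 by auto
        then have "g z = u" using u(3) by blast
        then show "Q \<in> \<phi> ` {z \<in> ball z0 r1. g z = u}" using incl z by blast
      next
        fix Q assume "Q \<in> \<phi> ` {z \<in> ball z0 r1. g z = u}"
        then obtain z where z: "z \<in> ball z0 r1" "g z = u" "Q = \<phi> z" by blast
        have "f Q = v" using fV[of z] u(3) z r1(3) by auto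
        moreover have "Q \<in> ballE C P r" using z \<open>\<phi> ` ball z0 r1 \<subseteq> ballE C P r\<close> by blast
        ultimately show "Q \<in> {Q \<in> ballE C P r. f Q = v}" by blast
      qed
      moreover have "inj_on \<phi> {z \<in> ball z0 r1. g z = u}"
        by (rule inj_on_subset[OF inj]) (use r1 in auto)
      ultimately show ?thesis using cardn by (simp add: card_image)
    qed
    then show ?thesis using \<delta>'(1) by blast
  qed
  then show ?thesis unfolding has_ram_index_def using R0(1) by blast
qed

section \<open>Charts on the curves y^2 = h x\<close>

definition sq_curve :: "(complex \<Rightarrow> complex) \<Rightarrow> cpt set" where
  "sq_curve h = insert None (Some ` {(x, y). y^2 = h x})"

lemma Some_in_sq_curve [simp]: "Some (x, y) \<in> sq_curve h \<longleftrightarrow> y^2 = h x"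
  by (auto simp: sq_curve_def)

lemma None_in_sq_curve [simp]: "None \<in> sq_curve h"
  by (simp add: sq_curve_def)

lemma ballE_Some_iff:
  "Q \<in> ballE C (Some (x0, y0)) r \<longleftrightarrow>
     Q \<in> C \<and> (\<exists>x y. Q = Some (x, y) \<and> cmod (x - x0) < r \<and> cmod (y - y0) < r)"
  by (auto simp: ballE_def split: option.splits)

lemma ballE_None_iff:
  "Q \<in> ballE C None r \<longleftrightarrow> Q \<in> C \<and> (Q = None \<or> (\<exists>x y. Q = Some (x, y) \<and> cmod x > 1 / r))"
  by (auto simp: ballE_def split: option.splits)

lemma square_eq_square_iff: "y^2 = a^2 \<longleftrightarrow> y = a \<or> y = - (a :: complex)"
proof -
  have "y^2 = a^2 \<longleftrightarrow> (y - a) * (y + a) = 0" by (simp add: algebra_simps power2_eq_square)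
  then show ?thesis by (auto simp: eq_neg_iff_add_eq_0)
qed

text \<open>Away from the branch points the curve is locally the graph of a branch of the
  square root of h.\<close>
lemma sq_curve_graph_chart:
  assumes h: "h holomorphic_on UNIV" and y0: "y0^2 = h x0" "y0 \<noteq> 0"
  obtains \<rho> Y where "Y holomorphic_on ball x0 \<rho>" "Y x0 = y0" "\<And>z. (Y z)^2 = h z"
    "curve_chart (sq_curve h) (Some (x0, y0)) (\<lambda>z. Some (z, Y z)) x0 \<rho>"
proof -
  define u where "u z = h z / y0^2" for z
  have "isCont h x0"
    using h by (meson UNIV_I continuous_on_eq_continuous_at holomorphic_on_imp_continuous_on open_UNIV)
  then have "isCont u x0" unfolding u_def using y0(2) by (intro continuous_intros) auto
  moreover have "u x0 = 1" unfolding u_def y0(1)[symmetric] using y0(2) by simp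
  ultimately obtain \<rho>1 where \<rho>1: "\<rho>1 > 0" "\<And>z. z \<in> ball x0 \<rho>1 \<Longrightarrow> u z \<notin> \<real>\<^sub>\<le>\<^sub>0"
    using continuous_at_not_nonpos_Reals_ball by blast
  define Y where "Y z = y0 * csqrt (u z)" for z
  have holY: "Y holomorphic_on ball x0 \<rho>1"
    unfolding Y_def u_def using \<rho>1(2) holomorphic_on_subset[OF h]
    by (intro holomorphic_intros) (auto simp: u_def)
  have Y0: "Y x0 = y0" by (simp add: Y_def \<open>u x0 = 1\<close>)
  have Ysq: "(Y z)^2 = h z" for z using y0(2) by (simp add: Y_def u_def power_mult_distrib)
  have cY: "isCont Y x0" by (rule holomorphic_on_ball_imp_isCont[OF holY \<rho>1(1)])
  obtain \<rho>2 where \<rho>2: "\<rho>2 > 0" "\<And>z. z \<in> ball x0 \<rho>2 \<Longrightarrow> cmod (Y z - y0) < cmod y0 / 2"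
    using continuous_at_ball_bound[OF cY, of "cmod y0 / 2"] y0(2) Y0 by auto
  define \<rho> where "\<rho> = min \<rho>1 \<rho>2"
  have "\<exists>r'>0. (\<lambda>z. Some (z, Y z)) ` ball x0 r' \<subseteq> ballE (sq_curve h) (Some (x0, y0)) r"
    if r: "r > 0" for r
  proof -
    obtain d where d: "d > 0" "\<And>z. z \<in> ball x0 d \<Longrightarrow> cmod (Y z - Y x0) < r"
      using continuous_at_ball_bound[OF cY r] by auto
    have "Some (z, Y z) \<in> ballE (sq_curve h) (Some (x0, y0)) r" if z: "z \<in> ball x0 (min d r)" for z
      using d(2)[of z] z Y0 Ysq by (simp add: ballE_Some_iff dist_norm norm_minus_commute)
    then show ?thesis using d r by (intro exI[of _ "min d r"]) auto
  qed
  moreover have "\<exists>r>0. ballE (sq_curve h) (Some (x0, y0)) r \<subseteq> (\<lambda>z. Some (z, Y z)) ` ball x0 \<rho>'"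
    if \<rho>': "0 < \<rho>'" "\<rho>' \<le> \<rho>" for \<rho>'
  proof (intro exI[of _ "min \<rho>' (cmod y0 / 2)"] conjI subsetI)
    show "0 < min \<rho>' (cmod y0 / 2)" using \<rho>' y0 by simp
    fix Q assume "Q \<in> ballE (sq_curve h) (Some (x0, y0)) (min \<rho>' (cmod y0 / 2))"
    then obtain x y where Q: "Q = Some (x, y)" "y^2 = h x" "cmod (x - x0) < \<rho>'"
        "cmod (y - y0) < cmod y0 / 2"
      by (auto simp: ballE_Some_iff)
    have x: "x \<in> ball x0 \<rho>'" "x \<in> ball x0 \<rho>2"
      using Q(3) \<rho>' by (auto simp: \<rho>_def dist_norm norm_minus_commute)
    have "y \<noteq> - Y x"
    proof
      assume "y = - Y x"
      then have "cmod (y0 - Y x) + cmod (y0 + Y x) < cmod y0"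
        using \<rho>2(2)[OF x(2)] Q(4) by (simp add: norm_minus_commute)
      moreover have "cmod (2 * y0) \<le> cmod (y0 - Y x) + cmod (y0 + Y x)"
        using norm_triangle_ineq[of "y0 - Y x" "y0 + Y x"] by simp
      ultimately show False using norm_ge_zero[of y0] by (simp add: norm_mult)
    qed
    then have "y = Y x" using Q(2) Ysq[of x] square_eq_square_iff by metis
    then show "Q \<in> (\<lambda>z. Some (z, Y z)) ` ball x0 \<rho>'" using Q(1) x(1) by blast
  qed
  ultimately have "curve_chart (sq_curve h) (Some (x0, y0)) (\<lambda>z. Some (z, Y z)) x0 \<rho>"
    unfolding curve_chart_def using \<rho>1 \<rho>2 Y0 by (auto simp: \<rho>_def inj_on_def)
  moreover have "Y holomorphic_on ball x0 \<rho>"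
    using holY by (rule holomorphic_on_subset) (simp add: \<rho>_def subset_ball)
  ultimately show ?thesis using that Y0 Ysq by blast
qed

text \<open>At a simple zero of h the curve is parametrised by y: x = X y with h (X y) = y^2,
  where X is a local inverse of h composed with squaring.\<close>
lemma sq_curve_branch_chart:
  assumes h: "h holomorphic_on UNIV" and h0: "h x0 = 0" and dh: "deriv h x0 \<noteq> 0"
  obtains \<rho> X where "X holomorphic_on ball 0 \<rho>" "X 0 = x0" "\<And>z. z \<in> ball 0 \<rho> \<Longrightarrow> h (X z) = z^2"
    "curve_chart (sq_curve h) (Some (x0, 0)) (\<lambda>z. Some (X z, z)) 0 \<rho>"
proof -
  obtain rS where rS: "rS > 0" "inj_on h (ball x0 rS)"
    using has_complex_derivative_locally_injective[OF h _ open_UNIV dh] by blast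
  define S where "S = ball x0 rS"
  have holS: "h holomorphic_on S" using holomorphic_on_subset[OF h] by simp
  obtain Hinv where Hinv: "Hinv holomorphic_on h ` S" "\<And>z. z \<in> S \<Longrightarrow> Hinv (h z) = z"
    using holomorphic_has_inverse[OF holS _ rS(2)[folded S_def]] by (metis S_def open_ball)
  have "open (h ` S)" using open_mapping_thm3[OF holS _ rS(2)[folded S_def]] by (simp add: S_def)
  moreover have "0 \<in> h ` S" using rS h0 by (metis S_def centre_in_ball imageI)
  ultimately obtain \<epsilon> where \<epsilon>: "\<epsilon> > 0" "ball 0 \<epsilon> \<subseteq> h ` S" by (meson open_contains_ball)
  define \<rho> where "\<rho> = min 1 \<epsilon>"
  have sq_in: "z^2 \<in> h ` S" if "z \<in> ball 0 \<rho>" for z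
  proof -
    have z: "cmod z < 1" "cmod z < \<epsilon>" using that by (auto simp: \<rho>_def)
    then have "cmod (z^2) < \<epsilon>"
      using mult_strict_mono[of "cmod z" 1 "cmod z" \<epsilon>] by (simp add: norm_power norm_mult power2_eq_square)
    then show ?thesis using \<epsilon>(2) by auto
  qed
  define X where "X z = Hinv (z^2)" for z
  have XS: "X z \<in> S" "h (X z) = z^2" if z: "z \<in> ball 0 \<rho>" for z
  proof -
    obtain t where "t \<in> S" "z^2 = h t" using sq_in[OF z] by blast
    then show "X z \<in> S" "h (X z) = z^2" by (simp_all add: X_def Hinv(2))
  qed
  have X0: "X 0 = x0" using Hinv(2)[of x0] rS h0 by (simp add: X_def S_def)
  have holX: "X holomorphic_on ball 0 \<rho>"
  proof -
    have "(Hinv \<circ> (\<lambda>z. z^2)) holomorphic_on ball 0 \<rho>"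
      by (rule holomorphic_on_compose_gen[OF _ Hinv(1)]) (auto intro: holomorphic_intros sq_in)
    then show ?thesis by (simp add: X_def[abs_def] o_def)
  qed
  have "\<exists>r'>0. (\<lambda>z. Some (X z, z)) ` ball 0 r' \<subseteq> ballE (sq_curve h) (Some (x0, 0)) r"
    if r: "r > 0" for r
  proof -
    obtain d where d: "d > 0" "\<And>z. z \<in> ball 0 d \<Longrightarrow> cmod (X z - X 0) < r"
      using continuous_at_ball_bound[OF holomorphic_on_ball_imp_isCont[OF holX] r] \<epsilon>(1)
      by (auto simp: \<rho>_def)
    have "Some (X z, z) \<in> ballE (sq_curve h) (Some (x0, 0)) r" if z: "z \<in> ball 0 (min d (min r \<rho>))" for z
      using d(2)[of z] z XS(2)[of z] X0 by (simp add: ballE_Some_iff)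
    then show ?thesis using d r \<epsilon>(1) by (intro exI[of _ "min d (min r \<rho>)"]) (auto simp: \<rho>_def)
  qed
  moreover have "\<exists>r>0. ballE (sq_curve h) (Some (x0, 0)) r \<subseteq> (\<lambda>z. Some (X z, z)) ` ball 0 \<rho>'"
    if \<rho>': "0 < \<rho>'" "\<rho>' \<le> \<rho>" for \<rho>'
  proof (intro exI[of _ "min \<rho>' rS"] conjI subsetI)
    show "0 < min \<rho>' rS" using \<rho>' rS by simp
    fix Q assume "Q \<in> ballE (sq_curve h) (Some (x0, 0)) (min \<rho>' rS)"
    then obtain x y where Q: "Q = Some (x, y)" "y^2 = h x" "cmod (x - x0) < rS" "cmod y < \<rho>'"
      by (auto simp: ballE_Some_iff)
    have "x \<in> S" using Q(3) by (simp add: S_def dist_norm norm_minus_commute)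
    then have "X y = x" using Hinv(2) Q(2) by (simp add: X_def)
    moreover have "y \<in> ball 0 \<rho>'" using Q(4) by simp
    ultimately show "Q \<in> (\<lambda>z. Some (X z, z)) ` ball 0 \<rho>'" using Q(1) by (simp add: image_iff)
  qed
  moreover have "0 < \<rho>" using \<epsilon> by (simp add: \<rho>_def)
  ultimately have "curve_chart (sq_curve h) (Some (x0, 0)) (\<lambda>z. Some (X z, z)) 0 \<rho>"
    unfolding curve_chart_def using X0 by (auto simp: inj_on_def)
  then show ?thesis using that holX X0 XS(2) by blast
qed

lemma sq_curve_near_infinity:
  fixes S :: "complex \<Rightarrow> complex"
  assumes on_curve: "\<And>v. v \<noteq> 0 \<Longrightarrow> (S v / v^3)^2 = h (1 / v^2)" and even: "\<And>v. S (- v) = S v"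
    and xy: "y^2 = h x" "1 / r^2 < cmod x" and r: "r > 0"
  obtains v where "v \<in> ball 0 r" "v \<noteq> 0" "x = 1 / v^2" "y = S v / v^3"
proof -
  have x0: "x \<noteq> 0" using xy(2) r by auto
  define v where "v = csqrt (inverse x)"
  have vsq: "v^2 = inverse x" by (simp add: v_def)
  have v0: "v \<noteq> 0" using x0 vsq by auto
  have "cmod v ^ 2 = 1 / cmod x" using vsq by (metis norm_inverse norm_power inverse_eq_divide)
  also have "\<dots> < r^2" using xy(2) r x0 by (simp add: divide_less_eq mult.commute)
  finally have "cmod v < r" using r by (meson power_less_imp_less_base less_imp_le)
  then have vb: "v \<in> ball 0 r" "- v \<in> ball 0 r" by auto
  have x: "x = 1 / v^2" using vsq x0 by (simp add: inverse_eq_divide)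
  have "y = S v / v^3 \<or> y = - (S v / v^3)"
    using xy(1) on_curve[OF v0] x square_eq_square_iff by metis
  then show ?thesis
  proof
    assume "y = S v / v^3"
    then show ?thesis using that[of v] vb v0 x by simp
  next
    assume "y = - (S v / v^3)"
    moreover have "S (- v) / (- v)^3 = - (S v / v^3)" by (simp add: even power_minus_odd)
    ultimately show ?thesis using that[of "- v"] vb v0 x by simp
  qed
qed

text \<open>At infinity a monic cubic curve is parametrised by v with x = 1/v^2 and y = S v/v^3,
  where S is the holomorphic square root of v^6 h (1/v^2) with S 0 = 1.\<close>
lemma sq_curve_infinity_chart:
  assumes h: "\<And>x. h x = x^3 + a * x^2 + b * x + c"
  obtains \<rho> S where "S holomorphic_on ball 0 \<rho>" "S 0 = 1"
    "curve_chart (sq_curve h) None (\<lambda>v. if v = 0 then None else Some (1 / v^2, S v / v^3)) 0 \<rho>"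
proof -
  define u where "u v = 1 + a * v^2 + b * v^4 + c * v^6" for v :: complex
  define S where "S v = csqrt (u v)" for v
  define \<phi> where "\<phi> v = (if v = 0 then None else Some (1 / v^2, S v / v^3))" for v
  have "isCont u 0" "u 0 = 1" unfolding u_def by (intro continuous_intros) simp
  then obtain d where d: "d > 0" "\<And>v. v \<in> ball 0 d \<Longrightarrow> u v \<notin> \<real>\<^sub>\<le>\<^sub>0"
    using continuous_at_not_nonpos_Reals_ball by blast
  define \<rho> where "\<rho> = min 1 d"
  have \<rho>: "\<rho> > 0" using d by (simp add: \<rho>_def)
  have holS: "S holomorphic_on ball 0 \<rho>"
    unfolding S_def u_def using d(2) by (intro holomorphic_intros) (auto simp: \<rho>_def u_def)
  have S0: "S 0 = 1" by (simp add: S_def u_def)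
  have S_nz: "S v \<noteq> 0" if "v \<in> ball 0 \<rho>" for v
    using d(2)[of v] that by (auto simp: S_def \<rho>_def)
  have S_even: "S (- v) = S v" for v by (simp add: S_def u_def)
  have on_curve: "(S v / v^3)^2 = h (1 / v^2)" if "v \<noteq> 0" for v
  proof -
    have "(S v / v^3)^2 = u v / v^6" by (simp add: S_def power_divide flip: power_mult)
    also have "\<dots> = h (1 / v^2)" unfolding u_def h using that by (simp add: field_simps)
    finally show ?thesis .
  qed
  have "inj_on \<phi> (ball 0 \<rho>)"
  proof (rule inj_onI)
    fix v1 v2 assume v: "v1 \<in> ball 0 \<rho>" "v2 \<in> ball 0 \<rho>" "\<phi> v1 = \<phi> v2"
    show "v1 = v2"
    proof (cases "v1 = 0 \<or> v2 = 0")
      case True then show ?thesis using v(3) by (auto simp: \<phi>_def split: if_splits)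
    next
      case False
      then have e: "1 / v1^2 = 1 / v2^2" "S v1 / v1^3 = S v2 / v2^3" using v(3) by (auto simp: \<phi>_def)
      then have "v2 = v1 \<or> v2 = - v1" using False square_eq_square_iff by (auto simp: field_simps)
      moreover have "v2 \<noteq> - v1"
      proof
        assume "v2 = - v1"
        then have "S v1 / v1^3 = - (S v1 / v1^3)" using e(2) S_even by simp
        then show False using False S_nz[OF v(1)] by (simp add: eq_neg_iff_add_eq_0[symmetric] field_simps)
      qed
      ultimately show ?thesis by auto
    qed
  qed
  moreover have "\<exists>r'>0. \<phi> ` ball 0 r' \<subseteq> ballE (sq_curve h) None r" if r: "r > 0" for r
  proof -
    have "\<phi> v \<in> ballE (sq_curve h) None r" if v: "v \<in> ball 0 (min 1 r)" for v
    proof (cases "v = 0")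
      case True then show ?thesis by (simp add: \<phi>_def ballE_None_iff)
    next
      case False
      have v1: "cmod v < 1" "cmod v < r" using v by auto
      then have "cmod v ^ 2 < r"
        using mult_strict_mono[of "cmod v" 1 "cmod v" r] by (simp add: power2_eq_square)
      then have "1 / r < 1 / cmod v ^ 2" using False by (simp add: frac_less2)
      then have "cmod (1 / v^2) > 1 / r" by (simp add: norm_divide norm_power)
      then show ?thesis using False on_curve[OF False] by (simp add: \<phi>_def ballE_None_iff)
    qed
    then show ?thesis using r by (intro exI[of _ "min 1 r"]) auto
  qed
  moreover have "\<exists>r>0. ballE (sq_curve h) None r \<subseteq> \<phi> ` ball 0 \<rho>'"
    if \<rho>': "0 < \<rho>'" "\<rho>' \<le> \<rho>" for \<rho>'
  proof (intro exI[of _ "\<rho>'^2"] conjI subsetI)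
    show "0 < \<rho>'^2" using \<rho>' by simp
    fix Q assume Q: "Q \<in> ballE (sq_curve h) None (\<rho>'^2)"
    show "Q \<in> \<phi> ` ball 0 \<rho>'"
    proof (cases Q)
      case None
      then show ?thesis using \<rho>' image_eqI[of None \<phi> 0] by (simp add: \<phi>_def)
    next
      case (Some p)
      then obtain x y where Qxy: "Q = Some (x, y)" "y^2 = h x" "cmod x > 1 / \<rho>'^2"
        using Q by (cases p) (auto simp: ballE_None_iff)
      then obtain v where v: "v \<in> ball 0 \<rho>'" "v \<noteq> 0" "x = 1 / v^2" "y = S v / v^3"
        using sq_curve_near_infinity[OF on_curve S_even Qxy(2,3) \<rho>'(1)] by blast
      then have "\<phi> v = Q" using Qxy(1) by (simp add: \<phi>_def)
      then show ?thesis using v(1) by blast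
    qed
  qed
  ultimately have "curve_chart (sq_curve h) None \<phi> 0 \<rho>"
    unfolding curve_chart_def using \<rho> by (simp add: \<phi>_def)
  then show ?thesis using that holS S0 unfolding \<phi>_def by blast
qed

section \<open>The curve E and the algebra of Q{psi4}\<close>

lemma sum_order_eq_degree:
  fixes p :: "complex poly"
  assumes "p \<noteq> 0"
  shows "(\<Sum>x\<in>{x. poly p x = 0}. order x p) = degree p"
proof -
  have "degree p = size (proots p)" by (simp add: size_proots_complex)
  also have "\<dots> = (\<Sum>x\<in>set_mset (proots p). count (proots p) x)" by (simp add: size_multiset_overloaded_eq)
  also have "\<dots> = (\<Sum>x\<in>{x. poly p x = 0}. order x p)" using assms by simp
  finally show ?thesis by simp
qed

lemma card_roots_rsquarefree:
  fixes p :: "complex poly"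
  assumes "p \<noteq> 0" "rsquarefree p"
  shows "card {x. poly p x = 0} = degree p"
proof -
  have "(\<Sum>x\<in>{x. poly p x = 0}. order x p) = (\<Sum>x\<in>{x. poly p x = 0}. 1)"
    using rsquarefree_root_order[OF assms(2) _ assms(1)] by (intro sum.cong) simp_all
  then show ?thesis using sum_order_eq_degree[OF assms(1)] by simp
qed

lemma order_eq_if_poly_factor:
  fixes p q :: "complex poly"
  assumes "\<And>z. poly p z = (z - a)^n * poly q z" "poly q a \<noteq> 0"
  shows "order a p = n"
proof -
  have "poly p = poly ([:-a, 1:]^n * q)" by (rule ext) (simp add: assms(1) poly_power poly_mult)
  then have p: "p = [:-a, 1:]^n * q" by (simp add: poly_eq_poly_eq_iff)
  have "order a p = order a ([:-a, 1:]^n) + order a q"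
    unfolding p using assms(2) by (intro order_mult) auto
  then show ?thesis using order_power_n_n[of a n] order_0I[OF assms(2)] by simp
qed

definition cubic_poly :: "complex \<Rightarrow> complex poly" where
  "cubic_poly s = [:0, 16 * s + 35, - (4 * s + 7), 1:]"

definition qnum_poly :: "complex \<Rightarrow> complex poly" where
  "qnum_poly s = [:344 * s + 1036, - (72 * s + 252), 27:]"

abbreviation cubic :: "complex \<Rightarrow> complex \<Rightarrow> complex" where
  "cubic s \<equiv> poly (cubic_poly s)"

abbreviation qnum :: "complex \<Rightarrow> complex \<Rightarrow> complex" where
  "qnum s \<equiv> poly (qnum_poly s)"

definition pole_lin :: "complex \<Rightarrow> complex \<Rightarrow> complex" where
  "pole_lin s x = 7 * x - 10 * s - 32"

definition zero3_lin :: "complex \<Rightarrow> complex \<Rightarrow> complex" where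
  "zero3_lin s x = 9 * x - 4 * s - 29"

definition zero4_lin :: "complex \<Rightarrow> complex \<Rightarrow> complex" where
  "zero4_lin s x = x - 2 * s - 4"

lemma pole_lin_holomorphic [holomorphic_intros]:
  "f holomorphic_on A \<Longrightarrow> (\<lambda>z. pole_lin s (f z)) holomorphic_on A"
  unfolding pole_lin_def by (intro holomorphic_intros)

lemma pole_lin_continuous [continuous_intros]:
  "continuous F f \<Longrightarrow> continuous F (\<lambda>z. pole_lin s (f z))"
  unfolding pole_lin_def by (intro continuous_intros)

lemma cubic_eq: "cubic s x = x * (x^2 - (4 * s + 7) * x + 16 * s + 35)"
  by (simp add: cubic_poly_def algebra_simps power2_eq_square)

lemma qnum_eq: "qnum s x = 27 * x^2 - (72 * s + 252) * x + 344 * s + 1036"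
  by (simp add: qnum_poly_def algebra_simps power2_eq_square)

lemma curveE_eq_sq_curve: "curveE s = sq_curve (cubic s)"
  by (simp add: curveE_def sq_curve_def cubic_eq)

lemma Some_in_curveE_iff: "Some (x, y) \<in> curveE s \<longleftrightarrow> y^2 = cubic s x"
  by (simp add: curveE_eq_sq_curve)

lemma cubic_holomorphic: "cubic s holomorphic_on A"
  by (intro holomorphic_intros)


lemma Qval_eq: "Qval s x y = 1/2 + qnum s x / ((4 * s + 2) * pole_lin s x ^ 2) * y"
  by (simp add: Qval_def qnum_eq pole_lin_def)

lemma psi4_eq:
  "psi4 s x = - (zero3_lin s x ^ 3 * zero4_lin s x ^ 4) / ((4 * s + 29) * pole_lin s x ^ 4)"
  by (simp add: psi4_def zero3_lin_def zero4_lin_def pole_lin_def)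

lemma Qpsi4_Some: "Qpsi4 s (Some (x, y)) = (if pole_lin s x = 0 then None else Some (Qval s x y))"
  by (simp add: Qpsi4_def pole_lin_def)

lemma Qpsi4_None: "Qpsi4 s None = None"
  by (simp add: Qpsi4_def)

lemma sqrt7_linear_relation:
  fixes s a b :: complex
  assumes "s^2 = 7" "a + b * s = 0"
  shows "a^2 = 7 * b^2"
proof -
  have "a = - (b * s)" using assms(2) by (simp add: eq_neg_iff_add_eq_0)
  then have "a^2 = b^2 * s^2" by (simp add: power_mult_distrib)
  then show ?thesis using assms(1) by simp
qed

lemma four_s_plus_2_nonzero: "s^2 = 7 \<Longrightarrow> 4 * s + 2 \<noteq> (0 :: complex)"
  using sqrt7_linear_relation[of s 2 4] by (auto simp: add.commute)

lemma four_s_plus_29_nonzero: "s^2 = 7 \<Longrightarrow> 4 * s + 29 \<noteq> (0 :: complex)"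
  using sqrt7_linear_relation[of s 29 4] by (auto simp: add.commute)

text \<open>Each certificate below writes a nonzero element a + b s of Q(sqrt 7), modulo s^2 - 7,
  as a combination of the polynomials assumed to vanish.\<close>
lemma nonzero_at_pole:
  fixes s x :: complex
  assumes s: "s^2 = 7" and T: "pole_lin s x = 0"
  shows "qnum s x \<noteq> 0" "cubic s x \<noteq> 0" "zero3_lin s x \<noteq> 0" "zero4_lin s x \<noteq> 0"
proof -
  have x: "7 * x - (32 + 10 * s) = 0" using T by (simp add: pole_lin_def algebra_simps)
  have "5584 + 368 * s = 7^2 * qnum s x - (7 * x - (32 + 10 * s)) * (- 900 - 234 * s + 189 * x)
      - (s^2 - 7) * (- 2340)"
    unfolding qnum_eq by algebra
  then show "qnum s x \<noteq> 0" using sqrt7_linear_relation[OF s, of 5584 368] x s by auto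
  have "- 188 + 326 * s = 7^3 * cubic s x - (7 * x - (32 + 10 * s)) *
      (1171 + 38 * s - 180 * s^2 - 119 * x - 126 * x * s + 49 * x^2) - (s^2 - 7) * (- 5380 - 1800 * s)"
    unfolding cubic_eq by algebra
  then show "cubic s x \<noteq> 0" using sqrt7_linear_relation[OF s, of "- 188" 326] x s by auto
  have "85 + 62 * s = 7 * zero3_lin s x - (7 * x - (32 + 10 * s)) * 9"
    unfolding zero3_lin_def by algebra
  then show "zero3_lin s x \<noteq> 0" using sqrt7_linear_relation[OF s, of 85 62] x by auto
  have "4 - 4 * s = 7 * zero4_lin s x - (7 * x - (32 + 10 * s))"
    unfolding zero4_lin_def by algebra
  then show "zero4_lin s x \<noteq> 0" using sqrt7_linear_relation[OF s, of 4 "- 4"] x by auto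
qed

lemma qnum_cubic_coprime:
  fixes s x :: complex
  assumes s: "s^2 = 7" and "qnum s x = 0"
  shows "cubic s x \<noteq> 0"
proof
  assume "cubic s x = 0"
  moreover have "(5097897 - 1692738 * s + 2931215 * x + 297998 * x * s - 115525 * x^2 - 77830 * x^2 * s)
      * qnum s x + (- 66807720 - 8790336 * s + 3119175 * x + 2101410 * x * s) * cubic s x - 1205308188
      = (s^2 - 7) * (- 582301872 + 83743072 * x + 20554528 * x^2 - 2801880 * x^3)"
    unfolding qnum_eq cubic_eq by algebra
  ultimately show False using assms by simp
qed

lemma cubic_rsquarefree: "s^2 = 7 \<Longrightarrow> rsquarefree (cubic_poly s)"
proof (unfold rsquarefree_roots, intro allI notI)
  fix x assume s: "s^2 = 7" and "cubic s x = 0 \<and> poly (pderiv (cubic_poly s)) x = 0"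
  moreover have "poly (pderiv (cubic_poly s)) x = 3 * x^2 - 2 * (4 * s + 7) * x + 16 * s + 35"
    by (simp add: cubic_poly_def pderiv_pCons algebra_simps power2_eq_square)
  moreover have "(- 37037 - 9572 * s + 8592 * x + 4848 * x * s) * cubic s x
      + (- 2835 + 1296 * s + 34111 * x + 10780 * x * s - 2864 * x^2 - 1616 * x^2 * s)
        * (3 * x^2 - 2 * (4 * s + 7) * x + 16 * s + 35) - 45927
      = (s^2 - 7) * (20736 + 8960 * x + 3760 * x^2 - 6464 * x^3)"
    unfolding cubic_eq by algebra
  ultimately show False by simp
qed

lemma qnum_rsquarefree: "s^2 = 7 \<Longrightarrow> rsquarefree (qnum_poly s)"
proof (unfold rsquarefree_roots, intro allI notI)
  fix x assume s: "s^2 = 7" and "qnum s x = 0 \<and> poly (pderiv (qnum_poly s)) x = 0"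
  moreover have "poly (pderiv (qnum_poly s)) x = 54 * x - (72 * s + 252)"
    by (simp add: qnum_poly_def pderiv_pCons algebra_simps)
  moreover have "(28 - 2 * s) * qnum s x + (56 + 14 * s - 14 * x + x * s) * (54 * x - (72 * s + 252))
      - 3024 = (s^2 - 7) * (- 1696 + 72 * x)"
    unfolding qnum_eq by algebra
  ultimately show False by simp
qed

lemma degree_cubic_poly [simp]: "degree (cubic_poly s) = 3"
  by (simp add: cubic_poly_def)

lemma degree_qnum_poly [simp]: "degree (qnum_poly s) = 2"
  by (simp add: qnum_poly_def)

lemma cubic_poly_nonzero: "cubic_poly s \<noteq> 0"
  by (simp add: cubic_poly_def)

lemma qnum_poly_nonzero: "qnum_poly s \<noteq> 0"
  by (simp add: qnum_poly_def)

lemma qnum_cubic_identity: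
  fixes s x :: complex
  assumes s: "s^2 = 7"
  shows "4 * qnum s x^2 * cubic s x * (4 * s + 29) =
    (4 * s + 2)^2 * ((4 * s + 29) * pole_lin s x^4 + zero3_lin s x^3 * zero4_lin s x^4)"
proof -
  have "4 * qnum s x^2 * cubic s x * (4 * s + 29) - ((4 * s + 2)^2 * ((4 * s + 29) * pole_lin s x^4 + zero3_lin s x^3 * zero4_lin s x^4)) = (s^2 - 7) * (13808640 + 70739968 * s + 123898368 * s^2 + 89915904 * s^3 + 31992832 * s^4 + 5793792 * s^5 + 503808 * s^6 + 16384 * s^7 - 630826560 * x - 819068928 * x * s - 479573440 * x * s^2 - 165614848 * x * s^3 - 33777408 * x * s^4 - 3540992 * x * s^5 - 143360 * x * s^6 + 426644288 * x^2 + 529302656 * x^2 * s + 268929728 * x^2 * s^2 + 70705152 * x^2 * s^3 + 9456384 * x^2 * s^4 + 494592 * x^2 * s^5 - 145756000 * x^3 - 156813056 * x^3 * s - 64950208 * x^3 * s^2 - 12208896 * x^3 * s^3 - 858368 * x^3 * s^4 + 29726304 * x^4 + 26222464 * x^4 * s + 7844224 * x^4 * s^2 + 802816 * x^4 * s^3 - 3863376 * x^5 - 2450304 * x^5 * s - 411264 * x^5 * s^2 + 299376 * x^6 + 108864 * x^6 * s - 11664 * x^7)"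
    unfolding qnum_eq cubic_eq pole_lin_def zero3_lin_def zero4_lin_def by algebra
  then show ?thesis using s by simp
qed

lemma Qval_sq_eq_one_minus_psi4:
  assumes s: "s^2 = 7" and y: "y^2 = cubic s x" and T: "pole_lin s x \<noteq> 0"
  shows "(2 * Qval s x y - 1)^2 = 1 - psi4 s x"
proof -
  define D where "D = (4 * s + 29) * pole_lin s x^4"
  have D: "D \<noteq> 0" "(4 * s + 2)^2 * pole_lin s x^4 \<noteq> 0"
    using T four_s_plus_2_nonzero[OF s] four_s_plus_29_nonzero[OF s] by (auto simp: D_def)
  have "(2 * Qval s x y - 1)^2 = 4 * qnum s x^2 * cubic s x / ((4 * s + 2)^2 * pole_lin s x^4)"
    by (simp add: Qval_eq power_divide power_mult_distrib y[symmetric] flip: power_mult)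
  also have "\<dots> = (D + zero3_lin s x^3 * zero4_lin s x^4) / D"
    using D qnum_cubic_identity[OF s, of x] by (simp add: D_def frac_eq_eq) algebra
  also have "\<dots> = 1 - psi4 s x"
    using D(1) by (simp add: psi4_eq D_def add_divide_distrib)
  finally show ?thesis .
qed

text \<open>The roots of fibre_poly s c are the x-coordinates of the points of E where
  (2 Q - 1)^2 = c, i.e. where psi4 = 1 - c.\<close>
definition fibre_poly :: "complex \<Rightarrow> complex \<Rightarrow> complex poly" where
  "fibre_poly s c = smult ((4 * s + 29) * (1 - c)) ([:- (10 * s + 32), 7:] ^ 4)
     + [:- (4 * s + 29), 9:] ^ 3 * [:- (2 * s + 4), 1:] ^ 4"

lemma poly_fibre_poly:
  "poly (fibre_poly s c) x = (4 * s + 29) * (1 - c) * pole_lin s x^4 + zero3_lin s x^3 * zero4_lin s x^4"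
  by (simp add: fibre_poly_def pole_lin_def zero3_lin_def zero4_lin_def algebra_simps)

lemma degree_fibre_poly: "degree (fibre_poly s c) = 7"
proof -
  have "degree (smult ((4 * s + 29) * (1 - c)) ([:- (10 * s + 32), 7:] ^ 4 :: complex poly)) \<le> 4"
    by (rule order.trans[OF degree_smult_le]) (simp add: degree_power_eq)
  moreover have "degree ([:- (4 * s + 29), 9:] ^ 3 * [:- (2 * s + 4), 1:] ^ 4 :: complex poly) = 7"
    by (simp add: degree_mult_eq degree_power_eq)
  ultimately show ?thesis unfolding fibre_poly_def by (subst degree_add_eq_right) auto
qed

lemma fibre_poly_nonzero: "fibre_poly s c \<noteq> 0"
  using degree_fibre_poly[of s c] by auto

lemma poly_fibre_poly_Qval:
  assumes s: "s^2 = 7" and y: "y^2 = cubic s x" and T: "pole_lin s x \<noteq> 0"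
  shows "poly (fibre_poly s c) x = (4 * s + 29) * pole_lin s x^4 * ((2 * Qval s x y - 1)^2 - c)"
proof -
  have "(4 * s + 29) * pole_lin s x^4 \<noteq> 0"
    using T four_s_plus_29_nonzero[OF s] by simp
  then show ?thesis
    unfolding Qval_sq_eq_one_minus_psi4[OF s y T] psi4_eq poly_fibre_poly
    by (simp add: field_simps)
qed

definition fibre_y :: "complex \<Rightarrow> complex \<Rightarrow> complex \<Rightarrow> complex" where
  "fibre_y s a x = (2 * a - 1) * ((4 * s + 2) * pole_lin s x ^ 2) / (2 * qnum s x)"

lemma fibre_poly_root_point:
  assumes s: "s^2 = 7" and a: "a \<noteq> 1/2" and r: "poly (fibre_poly s ((2 * a - 1)^2)) x = 0"
  shows "pole_lin s x \<noteq> 0" "qnum s x \<noteq> 0" "fibre_y s a x ^ 2 = cubic s x"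
    "Qval s x (fibre_y s a x) = a" "fibre_y s a x \<noteq> 0"
proof -
  define c where "c = (2 * a - 1)^2"
  define D where "D = (4 * s + 29) * pole_lin s x^4"
  have a1: "2 * a - 1 \<noteq> 0" using a by (auto simp: field_simps)
  have r': "D + zero3_lin s x^3 * zero4_lin s x^4 = c * D"
    using r by (simp add: poly_fibre_poly D_def c_def algebra_simps)
  show T: "pole_lin s x \<noteq> 0"
    using r' nonzero_at_pole[OF s] by (auto simp: D_def)
  have D0: "D \<noteq> 0" "c \<noteq> 0" "(4 * s + 2) * pole_lin s x ^ 2 \<noteq> 0"
    using T four_s_plus_29_nonzero[OF s] four_s_plus_2_nonzero[OF s] a1 by (auto simp: D_def c_def)
  have F: "(4 * qnum s x^2 * cubic s x) * (4 * s + 29) = (c * ((4 * s + 2) * pole_lin s x^2)^2) * (4 * s + 29)"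
    using qnum_cubic_identity[OF s, of x] r' unfolding D_def by algebra
  then have F': "4 * qnum s x^2 * cubic s x = c * ((4 * s + 2) * pole_lin s x^2)^2"
    using four_s_plus_29_nonzero[OF s] by simp
  show N: "qnum s x \<noteq> 0"
    using F' D0 by auto
  have "cubic s x = c * ((4 * s + 2) * pole_lin s x^2)^2 / (4 * qnum s x^2)"
    using F' N by (simp add: field_simps)
  then show "fibre_y s a x ^ 2 = cubic s x"
    by (simp add: fibre_y_def c_def power_divide power_mult_distrib)
  have "1/2 + M / E * ((2 * a - 1) * E / (2 * M)) = a" if "E \<noteq> 0" "M \<noteq> 0" for E M :: complex
    using that by (simp add: field_simps)
  from this[OF D0(3) N] show "Qval s x (fibre_y s a x) = a"
    by (simp add: Qval_eq fibre_y_def)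
  show "fibre_y s a x \<noteq> 0" using a1 D0(3) N by (simp add: fibre_y_def)
qed

lemma poly_pderiv_fibre_poly:
  "poly (pderiv (fibre_poly s c)) x = 28 * (4 * s + 29) * (1 - c) * pole_lin s x^3
     + 27 * zero3_lin s x^2 * zero4_lin s x^4 + 4 * zero3_lin s x^3 * zero4_lin s x^3"
proof -
  have "(poly (fibre_poly s c) has_field_derivative
      (4 * s + 29) * (1 - c) * (4 * pole_lin s x^3 * 7)
      + (3 * zero3_lin s x^2 * 9 * zero4_lin s x^4 + zero3_lin s x^3 * (4 * zero4_lin s x^3))) (at x)"
    unfolding poly_fibre_poly[abs_def] pole_lin_def zero3_lin_def zero4_lin_def
    by (auto intro!: derivative_eq_intros simp: numeral_eq_Suc) algebra
  from DERIV_unique[OF poly_DERIV this] show ?thesis by (simp add: algebra_simps)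
qed

lemma fibre_poly_rsquarefree:
  assumes s: "s^2 = 7" and c: "c \<noteq> 0" "c \<noteq> 1"
  shows "rsquarefree (fibre_poly s c)"
proof (unfold rsquarefree_roots, intro allI notI)
  fix z assume "poly (fibre_poly s c) z = 0 \<and> poly (pderiv (fibre_poly s c)) z = 0"
  then have g0: "(4 * s + 29) * (1 - c) * pole_lin s z^4 + zero3_lin s z^3 * zero4_lin s z^4 = 0"
    and g1: "28 * (4 * s + 29) * (1 - c) * pole_lin s z^3 + 27 * zero3_lin s z^2 * zero4_lin s z^4
      + 4 * zero3_lin s z^3 * zero4_lin s z^3 = 0"
    by (simp_all add: poly_fibre_poly poly_pderiv_fibre_poly)
  have T: "pole_lin s z \<noteq> 0"
    using g0 nonzero_at_pole[OF s] by auto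
  have K: "(4 * s + 29) * (1 - c) \<noteq> 0" using four_s_plus_29_nonzero[OF s] c by simp
  have "zero3_lin s z^2 * zero4_lin s z^3 * (27 * zero4_lin s z * pole_lin s z
      + 4 * zero3_lin s z * pole_lin s z - 28 * zero3_lin s z * zero4_lin s z) = 0"
    using g0 g1 by algebra
  moreover have "27 * zero4_lin s z * pole_lin s z + 4 * zero3_lin s z * pole_lin s z
      - 28 * zero3_lin s z * zero4_lin s z = 7 * qnum s z + (s^2 - 7) * 476"
    unfolding qnum_eq pole_lin_def zero3_lin_def zero4_lin_def by algebra
  ultimately have "zero3_lin s z^2 * zero4_lin s z^3 * qnum s z = 0" using s by simp
  moreover have "zero3_lin s z \<noteq> 0" "zero4_lin s z \<noteq> 0"
    using g0 T K by auto
  ultimately have "qnum s z = 0" by simp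
  then have "(4 * s + 29) * pole_lin s z^4 + zero3_lin s z^3 * zero4_lin s z^4 = 0"
    using qnum_cubic_identity[OF s, of z] four_s_plus_2_nonzero[OF s] by simp
  with g0 have "c * ((4 * s + 29) * pole_lin s z^4) = 0" by (simp add: algebra_simps)
  then show False using c T four_s_plus_29_nonzero[OF s] by simp
qed

lemma poly_fibre_poly_one:
  "poly (fibre_poly s 1) z = 729 * (z - (4 * s + 29) / 9)^3 * (z - (2 * s + 4))^4"
  by (simp add: poly_fibre_poly zero3_lin_def zero4_lin_def field_simps)

lemma fibre_poly_one_roots_distinct: "s^2 = 7 \<Longrightarrow> (4 * s + 29) / 9 \<noteq> (2 * s + 4 :: complex)"
  using sqrt7_linear_relation[of s 7 14] by (auto simp: field_simps)

lemma order_fibre_poly_one: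
  assumes s: "s^2 = 7"
  shows "order ((4 * s + 29) / 9) (fibre_poly s 1) = 3" "order (2 * s + 4) (fibre_poly s 1) = 4"
proof -
  define x1 x2 where "x1 = (4 * s + 29) / 9" and "x2 = 2 * s + 4"
  have ne: "x1 \<noteq> x2" using fibre_poly_one_roots_distinct[OF s] by (simp add: x1_def x2_def)
  have pG: "poly (fibre_poly s 1) z = 729 * (z - x1)^3 * (z - x2)^4" for z
    unfolding poly_fibre_poly_one x1_def x2_def ..
  show "order ((4 * s + 29) / 9) (fibre_poly s 1) = 3" unfolding x1_def[symmetric]
    by (rule order_eq_if_poly_factor[where q="smult 729 ([:- x2, 1:]^4)"])
      (use ne in \<open>simp_all add: pG poly_power\<close>)
  show "order (2 * s + 4) (fibre_poly s 1) = 4" unfolding x2_def[symmetric]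
    by (rule order_eq_if_poly_factor[where q="smult 729 ([:- x1, 1:]^3)"])
      (use ne in \<open>simp_all add: pG poly_power\<close>)
qed

section \<open>Local ramification of Q{psi4}\<close>

text \<open>At an ordinary point with Q \<noteq> 1/2, Q - w has the same order of vanishing in the chart
  x as fibre_poly s ((2 w - 1)^2) = 4 (4 s + 29) T^4 (Q - w) (Q + w - 1) at x0.\<close>
lemma has_ram_index_Qpsi4_regular:
  assumes s: "s^2 = 7" and P: "y0^2 = cubic s x0" "y0 \<noteq> 0" "pole_lin s x0 \<noteq> 0"
    and w: "Qval s x0 y0 \<noteq> 1/2"
  shows "has_ram_index (curveE s) (Qpsi4 s) (Some (x0, y0))
           (order x0 (fibre_poly s ((2 * Qval s x0 y0 - 1)^2)))"
proof -
  obtain \<rho> Y where holY: "Y holomorphic_on ball x0 \<rho>" and Y0: "Y x0 = y0"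
    and Ysq: "\<And>z. Y z ^ 2 = cubic s z"
    and chart: "curve_chart (curveE s) (Some (x0, y0)) (\<lambda>z. Some (z, Y z)) x0 \<rho>"
    using sq_curve_graph_chart[OF cubic_holomorphic P(1,2), folded curveE_eq_sq_curve] by blast
  define w where "w = Qval s x0 y0"
  define g where "g z = Qval s z (Y z)" for z
  define F where "F z = pole_lin s z * (g z + w - 1)" for z
  have w1: "2 * w - 1 \<noteq> 0" using w by (auto simp: w_def field_simps)
  have "\<rho> > 0" using chart by (simp add: curve_chart_def)
  then have "isCont F x0" unfolding F_def g_def Qval_eq
    using holomorphic_on_ball_imp_isCont[OF holY] P(3) four_s_plus_2_nonzero[OF s]
    by (intro continuous_intros) auto
  moreover have "F x0 \<noteq> 0" using P(3) w1 Y0 by (simp add: F_def g_def w_def)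
  ultimately obtain \<rho>' where \<rho>': "\<rho>' \<le> \<rho>" and chart': "curve_chart (curveE s) (Some (x0, y0)) (\<lambda>z. Some (z, Y z)) x0 \<rho>'"
    and Fnz: "\<And>z. z \<in> ball x0 \<rho>' \<Longrightarrow> F z \<noteq> 0"
    using curve_chart_shrink_nonzero[OF chart] by blast
  have T: "pole_lin s z \<noteq> 0" and g1: "g z + w - 1 \<noteq> 0" if "z \<in> ball x0 \<rho>'" for z
    using Fnz[OF that] by (auto simp: F_def)
  define G where "G = fibre_poly s ((2 * w - 1)^2)"
  define m where "m = order x0 G"
  obtain q where q: "G = [:- x0, 1:] ^ m * q" "\<not> [:- x0, 1:] dvd q"
    using order_decomp[OF fibre_poly_nonzero, of s "(2 * w - 1)^2" x0] unfolding m_def G_def by blast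
  have q0: "poly q x0 \<noteq> 0" using q(2) by (simp add: poly_eq_0_iff_dvd)
  have GQ: "poly G z = 4 * (4 * s + 29) * pole_lin s z^4 * (g z + w - 1) * (g z - w)" if "z \<in> ball x0 \<rho>'" for z
  proof -
    have "poly G z = (4 * s + 29) * pole_lin s z^4 * ((2 * g z - 1)^2 - (2 * w - 1)^2)"
      using poly_fibre_poly_Qval[OF s Ysq T[OF that]] unfolding G_def g_def .
    then show ?thesis by algebra
  qed
  have "poly G x0 = 0" using GQ[of x0] chart' Y0 by (simp add: curve_chart_def g_def w_def)
  then have m0: "m > 0" using fibre_poly_nonzero by (simp add: m_def G_def order_root)
  define k where "k z = poly q z / (4 * (4 * s + 29) * pole_lin s z^4 * (g z + w - 1))" for z
  have K: "4 * (4 * s + 29) * pole_lin s z^4 * (g z + w - 1) \<noteq> 0" if "z \<in> ball x0 \<rho>'" for z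
    using T[OF that] g1[OF that] four_s_plus_29_nonzero[OF s]
    by (simp only: mult_eq_0_iff power_eq_0_iff) simp
  have holg: "g holomorphic_on ball x0 \<rho>'"
    unfolding g_def Qval_eq using holomorphic_on_subset[OF holY subset_ball[OF \<rho>']] T four_s_plus_2_nonzero[OF s]
    by (intro holomorphic_intros) auto
  have holk: "k holomorphic_on ball x0 \<rho>'"
    unfolding k_def using holg K by (intro holomorphic_intros) auto
  have "x0 \<in> ball x0 \<rho>'" using chart' by (simp add: curve_chart_def)
  then have k0: "k x0 \<noteq> 0" using q0 K unfolding k_def divide_eq_0_iff by blast
  have geq: "g z = w + (z - x0)^m * k z" if z: "z \<in> ball x0 \<rho>'" for z
  proof -
    have "(z - x0)^m * poly q z = poly G z" by (simp add: q(1) poly_mult poly_power)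
    then show ?thesis using GQ[OF z] K[OF z] by (simp add: k_def field_simps)
  qed
  have "Qpsi4 s (Some (x0, y0)) = Some w" using P(3) by (simp add: Qpsi4_Some w_def)
  then show ?thesis unfolding w_def[symmetric] G_def[symmetric] m_def[symmetric]
    using T by (intro has_ram_index_chart[OF chart' holk k0 m0 geq, where V = Some])
      (simp_all add: Qpsi4_Some g_def p1_coord_Some)
qed

text \<open>Where qnum vanishes (and y \<noteq> 0), Q - 1/2 = qnum x y / ((4 s + 2) T^2) has a simple
  zero in the chart x, because qnum is squarefree.\<close>
lemma has_ram_index_Qpsi4_qnum_root:
  assumes s: "s^2 = 7" and P: "y0^2 = cubic s x0" "y0 \<noteq> 0" and N: "qnum s x0 = 0"
  shows "has_ram_index (curveE s) (Qpsi4 s) (Some (x0, y0)) 1"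
proof -
  obtain \<rho> Y where holY: "Y holomorphic_on ball x0 \<rho>" and Y0: "Y x0 = y0"
    and chart: "curve_chart (curveE s) (Some (x0, y0)) (\<lambda>z. Some (z, Y z)) x0 \<rho>"
    using sq_curve_graph_chart[OF cubic_holomorphic P(1,2), folded curveE_eq_sq_curve] by blast
  have T0: "pole_lin s x0 \<noteq> 0" using nonzero_at_pole[OF s] N by blast
  obtain \<rho>' where \<rho>': "\<rho>' \<le> \<rho>" and chart': "curve_chart (curveE s) (Some (x0, y0)) (\<lambda>z. Some (z, Y z)) x0 \<rho>'"
    and T: "\<And>z. z \<in> ball x0 \<rho>' \<Longrightarrow> pole_lin s z \<noteq> 0"
    using curve_chart_shrink_nonzero[OF chart pole_lin_continuous[OF continuous_ident] T0] by blast
  define k where "k z = (27 * z + 27 * x0 - (72 * s + 252)) * Y z / ((4 * s + 2) * pole_lin s z ^ 2)" for z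
  have holk: "k holomorphic_on ball x0 \<rho>'"
    unfolding k_def using holomorphic_on_subset[OF holY subset_ball[OF \<rho>']] T four_s_plus_2_nonzero[OF s]
    by (intro holomorphic_intros) auto
  have "poly (pderiv (qnum_poly s)) x0 \<noteq> 0"
    using qnum_rsquarefree[OF s] N unfolding rsquarefree_roots by blast
  then have "27 * x0 + 27 * x0 - (72 * s + 252) \<noteq> 0"
    by (simp add: qnum_poly_def pderiv_pCons algebra_simps)
  then have k0: "k x0 \<noteq> 0"
    using P(2) T0 four_s_plus_2_nonzero[OF s] by (simp add: k_def Y0)
  have geq: "Qval s z (Y z) = 1/2 + (z - x0)^1 * k z" for z
  proof -
    have "qnum s z = (z - x0) * (27 * z + 27 * x0 - (72 * s + 252))"
      using N unfolding qnum_eq by algebra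
    then show ?thesis by (simp add: Qval_eq k_def)
  qed
  have "Qpsi4 s (Some (x0, y0)) = Some (1/2)" using T0 N by (simp add: Qpsi4_Some Qval_eq)
  then show ?thesis
    using T by (intro has_ram_index_chart[OF chart' holk k0 _ geq, where V = Some])
      (simp_all add: Qpsi4_Some p1_coord_Some)
qed

text \<open>At a root x0 of the cubic, y is a coordinate and Q - 1/2 = y qnum x / ((4 s + 2) T^2)
  has a simple zero, since qnum and the cubic have no common root.\<close>
lemma has_ram_index_Qpsi4_branch_point:
  assumes s: "s^2 = 7" and c0: "cubic s x0 = 0"
  shows "has_ram_index (curveE s) (Qpsi4 s) (Some (x0, 0)) 1"
proof -
  have "poly (pderiv (cubic_poly s)) x0 \<noteq> 0"
    using cubic_rsquarefree[OF s] c0 unfolding rsquarefree_roots by blast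
  then have "deriv (cubic s) x0 \<noteq> 0"
    using DERIV_imp_deriv[OF poly_DERIV[of "cubic_poly s" x0]] by simp
  then obtain \<rho> X where holX: "X holomorphic_on ball 0 \<rho>" and X0: "X 0 = x0"
    and XS: "\<And>z. z \<in> ball 0 \<rho> \<Longrightarrow> cubic s (X z) = z^2"
    and chart: "curve_chart (curveE s) (Some (x0, 0)) (\<lambda>z. Some (X z, z)) 0 \<rho>"
    using sq_curve_branch_chart[OF cubic_holomorphic c0, folded curveE_eq_sq_curve] by blast
  have T0: "pole_lin s x0 \<noteq> 0" using nonzero_at_pole[OF s] c0 by blast
  have "\<rho> > 0" using chart by (simp add: curve_chart_def)
  then have "isCont (\<lambda>z. pole_lin s (X z)) 0"
    by (intro continuous_intros holomorphic_on_ball_imp_isCont[OF holX])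
  moreover have "pole_lin s (X 0) \<noteq> 0" using T0 X0 by simp
  ultimately obtain \<rho>' where \<rho>': "\<rho>' \<le> \<rho>" and chart': "curve_chart (curveE s) (Some (x0, 0)) (\<lambda>z. Some (X z, z)) 0 \<rho>'"
    and T: "\<And>z. z \<in> ball 0 \<rho>' \<Longrightarrow> pole_lin s (X z) \<noteq> 0"
    using curve_chart_shrink_nonzero[OF chart] by blast
  define k where "k z = qnum s (X z) / ((4 * s + 2) * pole_lin s (X z) ^ 2)" for z
  have holk: "k holomorphic_on ball 0 \<rho>'"
    unfolding k_def using holomorphic_on_subset[OF holX subset_ball[OF \<rho>']] T four_s_plus_2_nonzero[OF s]
    by (intro holomorphic_intros) auto
  have "qnum s x0 \<noteq> 0" using qnum_cubic_coprime[OF s] c0 by blast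
  then have k0: "k 0 \<noteq> 0" using T0 four_s_plus_2_nonzero[OF s] by (simp add: k_def X0)
  have geq: "Qval s (X z) z = 1/2 + (z - 0)^1 * k z" for z
    by (simp add: Qval_eq k_def)
  have "Qpsi4 s (Some (x0, 0)) = Some (1/2)" using T0 by (simp add: Qpsi4_Some Qval_eq)
  then show ?thesis
    using T by (intro has_ram_index_chart[OF chart' holk k0 _ geq, where V = Some])
      (simp_all add: Qpsi4_Some p1_coord_Some)
qed

text \<open>At the two points over the pole of psi4, 1 / Q = 2 (4 s + 2) T^2 / den has a double zero
  in the chart x, with den = (4 s + 2) T^2 + 2 qnum y nonzero there.\<close>
lemma has_ram_index_Qpsi4_pole:
  assumes s: "s^2 = 7" and P: "y0^2 = cubic s x0" "pole_lin s x0 = 0"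
  shows "has_ram_index (curveE s) (Qpsi4 s) (Some (x0, y0)) 2"
proof -
  have N0: "qnum s x0 \<noteq> 0" and "cubic s x0 \<noteq> 0" using nonzero_at_pole[OF s P(2)] by auto
  then have y0: "y0 \<noteq> 0" using P(1) by auto
  obtain \<rho> Y where holY: "Y holomorphic_on ball x0 \<rho>" and Y0: "Y x0 = y0"
    and chart: "curve_chart (curveE s) (Some (x0, y0)) (\<lambda>z. Some (z, Y z)) x0 \<rho>"
    using sq_curve_graph_chart[OF cubic_holomorphic P(1) y0, folded curveE_eq_sq_curve] by blast
  define den where "den z = (4 * s + 2) * pole_lin s z ^ 2 + 2 * qnum s z * Y z" for z
  have "\<rho> > 0" using chart by (simp add: curve_chart_def)
  then have "isCont den x0"
    unfolding den_def by (intro continuous_intros holomorphic_on_ball_imp_isCont[OF holY])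
  moreover have "den x0 \<noteq> 0" using P(2) N0 y0 by (simp add: den_def Y0)
  ultimately obtain \<rho>' where \<rho>': "\<rho>' \<le> \<rho>" and chart': "curve_chart (curveE s) (Some (x0, y0)) (\<lambda>z. Some (z, Y z)) x0 \<rho>'"
    and den: "\<And>z. z \<in> ball x0 \<rho>' \<Longrightarrow> den z \<noteq> 0"
    using curve_chart_shrink_nonzero[OF chart] by blast
  define g where "g z = 2 * ((4 * s + 2) * pole_lin s z ^ 2) / den z" for z
  define k where "k z = 98 * (4 * s + 2) / den z" for z
  have T: "pole_lin s z = 7 * (z - x0)" for z using P(2) by (simp add: pole_lin_def algebra_simps)
  have holk: "k holomorphic_on ball x0 \<rho>'"
    unfolding k_def den_def using holomorphic_on_subset[OF holY subset_ball[OF \<rho>']] den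
    by (intro holomorphic_intros) (auto simp: den_def)
  have "x0 \<in> ball x0 \<rho>'" using chart' by (simp add: curve_chart_def)
  moreover have "98 * (4 * s + 2) \<noteq> 0"
    using four_s_plus_2_nonzero[OF s] by (simp only: mult_eq_0_iff) simp
  ultimately have k0: "k x0 \<noteq> 0" using den unfolding k_def divide_eq_0_iff by blast
  have geq: "g z = 0 + (z - x0)^2 * k z" for z
  proof -
    have "2 * ((4 * s + 2) * pole_lin s z ^ 2) = (z - x0)^2 * (98 * (4 * s + 2))" unfolding T by algebra
    then show ?thesis by (simp add: g_def k_def)
  qed
  have fV: "Qpsi4 s (Some (z, Y z)) = inv_coord (g z)" if z: "z \<in> ball x0 \<rho>'" for z
  proof (cases "z = x0")
    case True then show ?thesis using P(2) by (simp add: Qpsi4_Some g_def inv_coord_def)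
  next
    case False
    then have D: "(4 * s + 2) * pole_lin s z ^ 2 \<noteq> 0" using T four_s_plus_2_nonzero[OF s] by simp
    then have "g z \<noteq> 0" using den[OF z] by (simp add: g_def)
    moreover have "Qval s z (Y z) = inverse (g z)"
      using D by (simp add: Qval_eq g_def den_def field_simps)
    ultimately show ?thesis using D by (simp add: Qpsi4_Some inv_coord_def)
  qed
  have "Qpsi4 s (Some (x0, y0)) = None" using P(2) by (simp add: Qpsi4_Some)
  then show ?thesis
    using fV p1_coord_inv_coord by (intro has_ram_index_chart[OF chart' holk k0 _ geq]) simp_all
qed

text \<open>In the chart v at infinity (x = 1/v^2), 1 / Q = v^3 k v with k 0 \<noteq> 0.\<close>
lemma has_ram_index_Qpsi4_infinity:
  assumes s: "s^2 = 7"
  shows "has_ram_index (curveE s) (Qpsi4 s) None 3"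
proof -
  have h: "cubic s x = x^3 + (- (4 * s + 7)) * x^2 + (16 * s + 35) * x + 0" for x
    unfolding cubic_eq by algebra
  obtain \<rho> S where holS: "S holomorphic_on ball 0 \<rho>" and S0: "S 0 = 1"
    and chart: "curve_chart (curveE s) None (\<lambda>v. if v = 0 then None else Some (1 / v^2, S v / v^3)) 0 \<rho>"
    using sq_curve_infinity_chart[OF h, folded curveE_eq_sq_curve] by blast
  define Tt where "Tt v = 7 - (10 * s + 32) * v^2" for v
  define Nt where "Nt v = 27 - (72 * s + 252) * v^2 + (344 * s + 1036) * v^4" for v
  define den where "den v = (4 * s + 2) * Tt v ^ 2 * v^3 + 2 * Nt v * S v" for v
  have "\<rho> > 0" using chart by (simp add: curve_chart_def)
  then have "isCont (\<lambda>v. Tt v * den v) 0" unfolding Tt_def Nt_def den_def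
    by (intro continuous_intros holomorphic_on_ball_imp_isCont[OF holS])
  moreover have "Tt 0 * den 0 \<noteq> 0" by (simp add: Tt_def Nt_def den_def S0)
  ultimately obtain \<rho>' where \<rho>': "\<rho>' \<le> \<rho>"
    and chart': "curve_chart (curveE s) None (\<lambda>v. if v = 0 then None else Some (1 / v^2, S v / v^3)) 0 \<rho>'"
    and nz: "\<And>v. v \<in> ball 0 \<rho>' \<Longrightarrow> Tt v * den v \<noteq> 0"
    using curve_chart_shrink_nonzero[OF chart] by blast
  have Tt: "Tt v \<noteq> 0" and den: "den v \<noteq> 0" if "v \<in> ball 0 \<rho>'" for v
    using nz[OF that] by auto
  define k where "k v = 2 * ((4 * s + 2) * Tt v ^ 2) / den v" for v
  have holk: "k holomorphic_on ball 0 \<rho>'"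
    unfolding k_def den_def Tt_def Nt_def using holomorphic_on_subset[OF holS subset_ball[OF \<rho>']] den
    by (intro holomorphic_intros) (auto simp: den_def Tt_def Nt_def)
  have "0 \<in> ball 0 \<rho>'" using chart' by (simp add: curve_chart_def)
  then have k0: "k 0 \<noteq> 0"
    using Tt den four_s_plus_2_nonzero[OF s] unfolding k_def divide_eq_0_iff by auto
  have fV: "Qpsi4 s (if v = 0 then None else Some (1 / v^2, S v / v^3)) = inv_coord (v^3 * k v)"
    if v: "v \<in> ball 0 \<rho>'" for v
  proof (cases "v = 0")
    case True then show ?thesis by (simp add: Qpsi4_None inv_coord_def)
  next
    case False
    have T: "pole_lin s (1 / v^2) = Tt v / v^2" and N: "qnum s (1 / v^2) = Nt v / v^4"
      unfolding pole_lin_def Tt_def qnum_eq Nt_def using False by (simp_all add: field_simps)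
    define E where "E = (4 * s + 2) * Tt v ^ 2"
    have E: "E \<noteq> 0" using Tt[OF v] four_s_plus_2_nonzero[OF s] by (simp add: E_def)
    have k: "k v = 2 * E / (E * v^3 + 2 * Nt v * S v)" by (simp add: k_def den_def E_def)
    have "E * v^3 + 2 * Nt v * S v \<noteq> 0" using den[OF v] by (simp add: den_def E_def)
    then have g0: "v^3 * k v \<noteq> 0" using False E by (simp add: k)
    have "a / v^4 / (c * (b / v^2)^2) = a / (c * b^2)" for a b c :: complex
      using False by (simp add: field_simps)
    then have "Qval s (1 / v^2) (S v / v^3) = 1/2 + Nt v / E * (S v / v^3)"
      by (simp add: Qval_eq T N E_def)
    also have "\<dots> = inverse (v^3 * k v)"
      using False E \<open>E * v^3 + 2 * Nt v * S v \<noteq> 0\<close> by (simp add: k field_simps)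
    finally show ?thesis using False Tt[OF v] T g0 by (simp add: Qpsi4_Some inv_coord_def)
  qed
  show ?thesis
    using fV p1_coord_inv_coord
    by (intro has_ram_index_chart[OF chart' holk k0, where g = "\<lambda>v. v^3 * k v"]) (simp_all add: Qpsi4_None)
qed

section \<open>Fibres and passport of Q{psi4}\<close>

lemma Qval_eq_half_iff:
  assumes s: "s^2 = 7" and T: "pole_lin s x \<noteq> 0"
  shows "Qval s x y = 1/2 \<longleftrightarrow> qnum s x = 0 \<or> y = 0"
  using T four_s_plus_2_nonzero[OF s] by (simp add: Qval_eq)

lemma Qpsi4_has_ram_index:
  assumes s: "s^2 = 7" and P: "P \<in> curveE s"
  shows "\<exists>e. has_ram_index (curveE s) (Qpsi4 s) P e"
proof (cases P)
  case None then show ?thesis using has_ram_index_Qpsi4_infinity[OF s] by blast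
next
  case (Some p)
  then obtain x y where Pxy: "P = Some (x, y)" and y: "y^2 = cubic s x"
    using P by (cases p) (auto simp: Some_in_curveE_iff)
  consider "pole_lin s x = 0" | "y = 0" | "qnum s x = 0" | "pole_lin s x \<noteq> 0" "y \<noteq> 0" "qnum s x \<noteq> 0"
    by blast
  then show ?thesis
  proof cases
    case 1 then show ?thesis using has_ram_index_Qpsi4_pole[OF s y] Pxy by blast
  next
    case 2 then show ?thesis using has_ram_index_Qpsi4_branch_point[OF s] y Pxy by auto
  next
    case 3
    moreover have "y \<noteq> 0" using qnum_cubic_coprime[OF s 3] y by auto
    ultimately show ?thesis using has_ram_index_Qpsi4_qnum_root[OF s y] Pxy by blast
  next
    case 4 then show ?thesis
      using has_ram_index_Qpsi4_regular[OF s y] Qval_eq_half_iff[OF s] Pxy by blast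
  qed
qed

lemma fib_Qpsi4_Some:
  assumes s: "s^2 = 7" and a: "a \<noteq> 1/2"
  shows "fib (curveE s) (Qpsi4 s) (Some a) =
    (\<lambda>x. Some (x, fibre_y s a x)) ` {x. poly (fibre_poly s ((2 * a - 1)^2)) x = 0}"
proof (intro equalityI subsetI)
  fix Q assume Q: "Q \<in> fib (curveE s) (Qpsi4 s) (Some a)"
  then obtain x y where Qxy: "Q = Some (x, y)" by (cases Q) (auto simp: fib_def Qpsi4_None)
  then have y: "y^2 = cubic s x" and T: "pole_lin s x \<noteq> 0" and q: "Qval s x y = a"
    using Q by (auto simp: fib_def Some_in_curveE_iff Qpsi4_Some split: if_splits)
  have r: "poly (fibre_poly s ((2 * a - 1)^2)) x = 0" using poly_fibre_poly_Qval[OF s y T] q by simp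
  have "qnum s x / ((4 * s + 2) * pole_lin s x ^ 2) * y = a - 1/2"
    using q unfolding Qval_eq by (simp add: algebra_simps)
  moreover have "M / E * y = a - 1/2 \<Longrightarrow> E \<noteq> 0 \<Longrightarrow> M \<noteq> 0 \<Longrightarrow> y = (2 * a - 1) * E / (2 * M)"
    for M E :: complex by (simp add: field_simps)
  ultimately have "y = fibre_y s a x"
    using fibre_poly_root_point(2)[OF s a r] T four_s_plus_2_nonzero[OF s] by (simp add: fibre_y_def)
  then show "Q \<in> (\<lambda>x. Some (x, fibre_y s a x)) ` {x. poly (fibre_poly s ((2 * a - 1)^2)) x = 0}"
    using Qxy r by blast
next
  fix Q assume "Q \<in> (\<lambda>x. Some (x, fibre_y s a x)) ` {x. poly (fibre_poly s ((2 * a - 1)^2)) x = 0}"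
  then obtain x where "Q = Some (x, fibre_y s a x)" "poly (fibre_poly s ((2 * a - 1)^2)) x = 0" by blast
  then show "Q \<in> fib (curveE s) (Qpsi4 s) (Some a)"
    using fibre_poly_root_point[OF s a] by (simp add: fib_def Some_in_curveE_iff Qpsi4_Some)
qed

lemma ram_index_Qpsi4_Some:
  assumes s: "s^2 = 7" and a: "a \<noteq> 1/2" and r: "poly (fibre_poly s ((2 * a - 1)^2)) x = 0"
  shows "ram_index (curveE s) (Qpsi4 s) (Some (x, fibre_y s a x)) = order x (fibre_poly s ((2 * a - 1)^2))"
  using has_ram_index_Qpsi4_regular[OF s fibre_poly_root_point(3,5,1)[OF s a r]]
    fibre_poly_root_point(4)[OF s a r] a
  by (simp add: ram_index_eqI)

lemma degree_Qpsi4_Some: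
  assumes s: "s^2 = 7" and a: "a \<noteq> 1/2"
  shows "finite (fib (curveE s) (Qpsi4 s) (Some a)) \<and>
         (\<Sum>Q\<in>fib (curveE s) (Qpsi4 s) (Some a). ram_index (curveE s) (Qpsi4 s) Q) = 7"
proof -
  define R where "R = {x. poly (fibre_poly s ((2 * a - 1)^2)) x = 0}"
  have "finite R" unfolding R_def by (rule poly_roots_finite[OF fibre_poly_nonzero])
  have inj: "inj_on (\<lambda>x. Some (x, fibre_y s a x)) R" by (auto simp: inj_on_def)
  have "(\<Sum>Q\<in>fib (curveE s) (Qpsi4 s) (Some a). ram_index (curveE s) (Qpsi4 s) Q)
      = (\<Sum>x\<in>R. ram_index (curveE s) (Qpsi4 s) (Some (x, fibre_y s a x)))"
    unfolding fib_Qpsi4_Some[OF s a] R_def[symmetric] by (rule sum.reindex_cong[OF inj refl]) simp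
  also have "\<dots> = (\<Sum>x\<in>R. order x (fibre_poly s ((2 * a - 1)^2)))"
    by (rule sum.cong) (auto simp: R_def ram_index_Qpsi4_Some[OF s a])
  also have "\<dots> = 7" unfolding R_def by (simp add: sum_order_eq_degree fibre_poly_nonzero degree_fibre_poly)
  finally show ?thesis using \<open>finite R\<close> unfolding fib_Qpsi4_Some[OF s a] R_def[symmetric] by simp
qed

lemma fib_Qpsi4_half:
  assumes s: "s^2 = 7"
  shows "fib (curveE s) (Qpsi4 s) (Some (1/2)) =
    Some ` (SIGMA x:{x. qnum s x = 0}. {y. y^2 = cubic s x}) \<union> (\<lambda>x. Some (x, 0)) ` {x. cubic s x = 0}"
proof (intro equalityI subsetI)
  fix Q assume Q: "Q \<in> fib (curveE s) (Qpsi4 s) (Some (1/2))"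
  then obtain x y where Qxy: "Q = Some (x, y)" by (cases Q) (auto simp: fib_def Qpsi4_None)
  then have y: "y^2 = cubic s x" and T: "pole_lin s x \<noteq> 0" and "Qval s x y = 1/2"
    using Q by (auto simp: fib_def Some_in_curveE_iff Qpsi4_Some split: if_splits)
  then have "qnum s x = 0 \<or> y = 0" using Qval_eq_half_iff[OF s T] by simp
  then show "Q \<in> Some ` (SIGMA x:{x. qnum s x = 0}. {y. y^2 = cubic s x}) \<union> (\<lambda>x. Some (x, 0)) ` {x. cubic s x = 0}"
    using Qxy y by auto
next
  fix Q assume "Q \<in> Some ` (SIGMA x:{x. qnum s x = 0}. {y. y^2 = cubic s x}) \<union> (\<lambda>x. Some (x, 0)) ` {x. cubic s x = 0}"
  then obtain x y where Q: "Q = Some (x, y)" "y^2 = cubic s x" "qnum s x = 0 \<or> y = 0"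
    by auto
  then have "pole_lin s x \<noteq> 0" using nonzero_at_pole[OF s] by auto
  then show "Q \<in> fib (curveE s) (Qpsi4 s) (Some (1/2))"
    using Q Qval_eq_half_iff[OF s] by (simp add: fib_def Some_in_curveE_iff Qpsi4_Some)
qed

lemma degree_Qpsi4_half:
  assumes s: "s^2 = 7"
  shows "finite (fib (curveE s) (Qpsi4 s) (Some (1/2))) \<and>
         (\<Sum>Q\<in>fib (curveE s) (Qpsi4 s) (Some (1/2)). ram_index (curveE s) (Qpsi4 s) Q) = 7"
proof -
  define A where "A = Some ` (SIGMA x:{x. qnum s x = 0}. {y. y^2 = cubic s x})"
  define B where "B = (\<lambda>x. Some (x, 0 :: complex)) ` {x. cubic s x = 0}"
  have fin_N: "finite {x. qnum s x = 0}" and fin_C: "finite {x. cubic s x = 0}"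
    by (simp_all add: poly_roots_finite cubic_poly_nonzero qnum_poly_nonzero)
  have card_y: "card {y. y^2 = cubic s x} = 2" if "qnum s x = 0" for x
    using card_nth_roots[of "cubic s x" 2] qnum_cubic_coprime[OF s that] by simp
  then have fin_y: "finite {y. y^2 = cubic s x}" if "qnum s x = 0" for x
    using that card.infinite by fastforce
  have "card A = (\<Sum>x\<in>{x. qnum s x = 0}. card {y. y^2 = cubic s x})"
    unfolding A_def using fin_N fin_y by (subst card_image) (auto simp: card_SigmaI)
  also have "\<dots> = 2 * card {x. qnum s x = 0}" using card_y by simp
  also have "\<dots> = 4"
    using card_roots_rsquarefree[OF qnum_poly_nonzero qnum_rsquarefree[OF s]] by simp
  finally have cA: "card A = 4" .
  have cB: "card B = 3" unfolding B_def
    using card_roots_rsquarefree[OF cubic_poly_nonzero cubic_rsquarefree[OF s]]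
    by (subst card_image) (auto simp: inj_on_def)
  have fA: "finite A" unfolding A_def using fin_N fin_y by auto
  have fB: "finite B" unfolding B_def using fin_C by simp
  have disj: "A \<inter> B = {}" unfolding A_def B_def using qnum_cubic_coprime[OF s] by auto
  have "ram_index (curveE s) (Qpsi4 s) Q = 1" if "Q \<in> A \<union> B" for Q
  proof -
    obtain x y where Q: "Q = Some (x, y)" "y^2 = cubic s x" "qnum s x = 0 \<and> y \<noteq> 0 \<or> y = 0"
      using \<open>Q \<in> A \<union> B\<close> qnum_cubic_coprime[OF s] unfolding A_def B_def by force
    then have "has_ram_index (curveE s) (Qpsi4 s) Q 1"
      using has_ram_index_Qpsi4_qnum_root[OF s Q(2)] has_ram_index_Qpsi4_branch_point[OF s]
      by auto
    then show ?thesis by (rule ram_index_eqI)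
  qed
  then have "(\<Sum>Q\<in>A \<union> B. ram_index (curveE s) (Qpsi4 s) Q) = card (A \<union> B)" by simp
  also have "\<dots> = 7" using card_Un_disjoint[OF fA fB disj] cA cB by simp
  finally show ?thesis using fA fB fib_Qpsi4_half[OF s] unfolding A_def B_def by simp
qed

lemma fib_Qpsi4_None:
  assumes s: "s^2 = 7"
  defines "xi \<equiv> (10 * s + 32) / 7"
  defines "yi \<equiv> csqrt (cubic s xi)"
  shows "fib (curveE s) (Qpsi4 s) None = {None, Some (xi, yi), Some (xi, - yi)}"
proof -
  have T: "pole_lin s x = 0 \<longleftrightarrow> x = xi" for x unfolding xi_def pole_lin_def by (auto simp: field_simps)
  have "y^2 = cubic s xi \<longleftrightarrow> y = yi \<or> y = - yi" for y
    using square_eq_square_iff[of y yi] by (simp add: yi_def)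
  then show ?thesis
    using T
    by (auto simp: fib_def Some_in_curveE_iff Qpsi4_Some Qpsi4_None curveE_eq_sq_curve split: if_splits)
qed

lemma passport_degree_Qpsi4_None:
  assumes s: "s^2 = 7"
  shows "passport_at (curveE s) (Qpsi4 s) None = {#2, 2, 3#}"
    "finite (fib (curveE s) (Qpsi4 s) None) \<and>
     (\<Sum>Q\<in>fib (curveE s) (Qpsi4 s) None. ram_index (curveE s) (Qpsi4 s) Q) = 7"
proof -
  define xi where "xi = (10 * s + 32) / 7"
  define yi where "yi = csqrt (cubic s xi)"
  have T: "pole_lin s xi = 0" by (simp add: xi_def pole_lin_def field_simps)
  have yi: "yi^2 = cubic s xi" "(- yi)^2 = cubic s xi" by (simp_all add: yi_def)
  then have "yi \<noteq> - yi" using nonzero_at_pole(2)[OF s T] by auto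
  moreover have "ram_index (curveE s) (Qpsi4 s) None = 3"
    "ram_index (curveE s) (Qpsi4 s) (Some (xi, yi)) = 2"
    "ram_index (curveE s) (Qpsi4 s) (Some (xi, - yi)) = 2"
    using has_ram_index_Qpsi4_infinity[OF s] has_ram_index_Qpsi4_pole[OF s _ T] yi
    by (simp_all add: ram_index_eqI)
  ultimately show "passport_at (curveE s) (Qpsi4 s) None = {#2, 2, 3#}"
    "finite (fib (curveE s) (Qpsi4 s) None) \<and>
     (\<Sum>Q\<in>fib (curveE s) (Qpsi4 s) None. ram_index (curveE s) (Qpsi4 s) Q) = 7"
    unfolding passport_at_def fib_Qpsi4_None[OF s, folded xi_def yi_def] by auto
qed

lemma degree_Qpsi4:
  assumes s: "s^2 = 7"
  shows "finite (fib (curveE s) (Qpsi4 s) w) \<and>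
         (\<Sum>Q\<in>fib (curveE s) (Qpsi4 s) w. ram_index (curveE s) (Qpsi4 s) Q) = 7"
proof (cases w)
  case (Some a)
  then show ?thesis using degree_Qpsi4_half[OF s] degree_Qpsi4_Some[OF s, of a] by (cases "a = 1/2") auto
qed (use passport_degree_Qpsi4_None(2)[OF s] in simp)

lemma passport_Qpsi4_zero_one:
  assumes s: "s^2 = 7" and a: "a = 0 \<or> a = 1"
  shows "passport_at (curveE s) (Qpsi4 s) (Some a) = {#4, 3#}"
proof -
  have a2: "a \<noteq> 1/2" "(2 * a - 1)^2 = 1" using a by auto
  define x1 x2 where "x1 = (4 * s + 29) / 9" and "x2 = 2 * s + 4"
  have roots: "{x. poly (fibre_poly s 1) x = 0} = {x1, x2}"
    by (auto simp: poly_fibre_poly_one x1_def x2_def)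
  have "poly (fibre_poly s 1) x1 = 0" "poly (fibre_poly s 1) x2 = 0" using roots by auto
  then have "ram_index (curveE s) (Qpsi4 s) (Some (x1, fibre_y s a x1)) = 3"
    "ram_index (curveE s) (Qpsi4 s) (Some (x2, fibre_y s a x2)) = 4"
    using ram_index_Qpsi4_Some[OF s a2(1), unfolded a2(2)] order_fibre_poly_one[OF s, folded x1_def x2_def]
    by simp_all
  moreover have "x1 \<noteq> x2" using fibre_poly_one_roots_distinct[OF s] by (simp add: x1_def x2_def)
  ultimately show ?thesis
    unfolding passport_at_def fib_Qpsi4_Some[OF s a2(1)] a2(2) roots by auto
qed

lemma Qpsi4_unramified:
  assumes s: "s^2 = 7" and P: "P \<in> curveE s" and f: "Qpsi4 s P \<notin> {Some 0, Some 1, None}"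
  shows "ram_index (curveE s) (Qpsi4 s) P = 1"
proof -
  obtain x y where P: "P = Some (x, y)" "y^2 = cubic s x"
    using P f by (cases P) (auto simp: Qpsi4_None Some_in_curveE_iff)
  define a where "a = Qval s x y"
  have T: "pole_lin s x \<noteq> 0" and a01: "a \<noteq> 0" "a \<noteq> 1"
    using f P by (auto simp: Qpsi4_Some a_def split: if_splits)
  show ?thesis
  proof (cases "a = 1/2")
    case True
    then have "qnum s x = 0 \<and> y \<noteq> 0 \<or> y = 0" using Qval_eq_half_iff[OF s T] by (auto simp: a_def)
    then show ?thesis using has_ram_index_Qpsi4_qnum_root[OF s P(2)] has_ram_index_Qpsi4_branch_point[OF s] P
      by (auto intro: ram_index_eqI)
  next
    case False
    then have "y \<noteq> 0" using Qval_eq_half_iff[OF s T] by (auto simp: a_def)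
    define c where "c = (2 * a - 1)^2"
    have "c \<noteq> 0" using False by (auto simp: c_def field_simps)
    moreover have "c = 4 * a * (a - 1) + 1" by (simp add: c_def power2_eq_square algebra_simps)
    then have "c \<noteq> 1" using a01 by auto
    ultimately have c: "c \<noteq> 0" "c \<noteq> 1" by blast+
    have "poly (fibre_poly s c) x = 0" using poly_fibre_poly_Qval[OF s P(2) T] by (simp add: c_def a_def)
    then have "order x (fibre_poly s c) = 1"
      using rsquarefree_root_order[OF fibre_poly_rsquarefree[OF s c]] fibre_poly_nonzero by blast
    then show ?thesis using has_ram_index_Qpsi4_regular[OF s P(2) \<open>y \<noteq> 0\<close> T] False P
      by (simp add: a_def c_def ram_index_eqI)
  qed
qed

theorem mainTheorem3:
  fixes s :: complex
  assumes "s^2 = 7"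
  shows "(\<forall>x y. Some (x, y) \<in> curveE s \<and> 7 * x - 10 * s - 32 \<noteq> 0 \<longrightarrow>
            (2 * Qval s x y - 1)^2 = 1 - psi4 s x) \<and>
         belyi_map_passport (curveE s) (Qpsi4 s) 7 {#4, 3#} {#4, 3#} {#2, 2, 3#}"
  using Qval_sq_eq_one_minus_psi4[OF assms] Qpsi4_has_ram_index[OF assms] degree_Qpsi4[OF assms]
    Qpsi4_unramified[OF assms] passport_Qpsi4_zero_one[OF assms] passport_degree_Qpsi4_None(1)[OF assms]
  by (auto simp: belyi_map_passport_def Some_in_curveE_iff pole_lin_def)

end
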